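(* Let $(X,\mathcal{H},\lambda)$ be a homogenizer and $1\le p<+\infty$. The mean value $M$ on $(X,\mathcal{H},\lambda)$ extends uniquely to a continuous linear form (still denoted $M$) on $\mathfrak{X}^p(X,\mathcal{H},\lambda)$. Moreover, for every $u\in\mathfrak{X}^p(X,\mathcal{H},\lambda)$ and every relatively compact open set $\Omega\subset X$, $u\circ H_\varepsilon\to M(u)$ (the constant function) weakly in $L^p(\Omega)$ as $\varepsilon\to\theta$, where $u\circ H_\varepsilon$ is restricted to $\Omega$.
   Context: An $\mathbb{R}$-group is an abelian group $E$ (operation written multiplicatively) whose underlying set is a subset of $\mathbb{R}$ containing all positive integers, such that: (RG1) with the natural order of $\mathbb{R}$, $E$ is a totally ordered group; (RG2) with the topology induced from $\mathbb{R}$, $E$ is a locally compact group; (RG3) there is a nonconstant continuous homomorphism $h:E\to\mathbb{R}_+^*$ such that for every $\alpha\in E$ the set $\{\varepsilon\in E:\varepsilon\ge\alpha\}$ is integrable for $h\cdot m$, $m$ a Haar measure on $E$. $e$ is the identity of $E$, $\varepsilon^{-1}$ the group inverse, $\theta=\inf E\in\mathbb{R}\cup\{\pm\infty\}$; inequalities refer to the order of $\mathbb{R}$. An action of $E$ on $X$ is a family $(H_\varepsilon)_{\varepsilon\in E}$ of bijections of $X$ with $H_\varepsilon\circ H_{\varepsilon'}=H_{\varepsilon\varepsilon'}$, $H_e=\mathrm{id}_X$; continuous if $(\varepsilon,x)\mapsto H_\varepsilon(x)$ is continuous on $E\times X$; absorptive if some $\omega\in X$ satisfies: for every neighbourhood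 $V$ of $\omega$ and every $x\in X$ there are a neighbourhood $U$ of $x$ and $\alpha\in E$ with $H_{\varepsilon^{-1}}(U)\subset V$ for all $\varepsilon\le\alpha$; this $\omega$ is unique, the center. A set $T$ is balanced if $H_{\varepsilon^{-1}}(T)\subset T$ for all $\varepsilon\le e$; elementary if it is a balanced relatively compact neighbourhood of $\omega$. A positive Radon measure $\lambda$ is $\mathcal{H}$-homogeneous if for each $\varepsilon$ there is $c(\varepsilon)>0$ with $\int\varphi(H_\varepsilon(x))d\lambda(x)=c(\varepsilon)\int\varphi\,d\lambda$ for all $\varphi\in\mathcal{K}(X)$; it is nontrivial if $\lambda\ne0$, $\lambda\ne\delta_\omega$. A homogenizer is a triple $(X,\mathcal{H},\lambda)$ with $X$ a noncompact locally compact space in which each point has a countable neighbourhood base, $\mathcal{H}$ a continuous absorptive action of an $\mathbb{R}$-group $E$ on $X$, $\lambda$ a nontrivial $\mathcal{H}$-homogeneous positive Radon measure; $X$ is equipped with $\lambda$. $\mathcal{B}(X)$ is the Banach space of bounded continuous complex functions with the sup norm. $\Pi^\infty(X,\mathcal{H},\lambda)$ is the space of $u\in\mathcal{B}(X)$ for which there is a constant $\tilde u\in\mathbb{C}$ with $u\circ H_\varepsilon\to\tilde u$ weak-$*$ in $L^\infty(X)$ as $\varepsilon\to\theta$; the mean value is $M:\Pi^\infty(X,\mathcal{H},\lambda)\to\mathbb{C}$, $M(u)=\tilde u$. $\Xi^p(X,\mathcal{H},\lambda)$ is the space of $u\in L^p_{loc}(X)$ with $\sup_{\varepsilon\le e}\int_K|u\circ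 H_\varepsilon|^pd\lambda<\infty$ for all compact $K$, normed (as a Banach space) by $\|u\|_{\Xi^p}=\sup_{\varepsilon\le e}(\int_B|u(H_\varepsilon(x))|^pd\lambda(x))^{1/p}$, $B$ a fixed open elementary set. $\mathfrak{X}^p(X,\mathcal{H},\lambda)$ is the closure of $\Pi^\infty(X,\mathcal{H},\lambda)$ in $\Xi^p(X,\mathcal{H},\lambda)$. *)

theory Defs
  imports "HOL-Analysis.Analysis"
begin

definition haar_measure_on ::
  "real set \<Rightarrow> (real \<Rightarrow> real \<Rightarrow> real) \<Rightarrow> real measure \<Rightarrow> bool" where
  "haar_measure_on E gmul m \<longleftrightarrow>
     space m = E \<and> sets m = sets (restrict_space borel E) \<and>
     (\<forall>K. K \<subseteq> E \<and> compact K \<longrightarrow> emeasure m K < \<infinity>) \<and>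
     (\<exists>A\<in>sets m. emeasure m A \<noteq> 0) \<and>
     (\<forall>a\<in>E. \<forall>A\<in>sets m. emeasure m ((\<lambda>x. gmul a x) ` A) = emeasure m A)"

definition R_group ::
  "real set \<Rightarrow> (real \<Rightarrow> real \<Rightarrow> real) \<Rightarrow> real \<Rightarrow> (real \<Rightarrow> real) \<Rightarrow> bool" where
  "R_group E gmul e iv \<longleftrightarrow>
     \<comment> \<open>abelian group\<close>
     (\<forall>x\<in>E. \<forall>y\<in>E. gmul x y \<in> E) \<and> e \<in> E \<and> (\<forall>x\<in>E. iv x \<in> E) \<and>
     (\<forall>x\<in>E. \<forall>y\<in>E. \<forall>z\<in>E. gmul (gmul x y) z = gmul x (gmul y z)) \<and>
     (\<forall>x\<in>E. \<forall>y\<in>E. gmul x y = gmul y x) \<and>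
     (\<forall>x\<in>E. gmul e x = x) \<and> (\<forall>x\<in>E. gmul (iv x) x = e) \<and>
     \<comment> \<open>contains all positive integers\<close>
     (\<forall>n::nat. 1 \<le> n \<longrightarrow> real n \<in> E) \<and>
     \<comment> \<open>(RG1) totally ordered group for the natural order of R\<close>
     (\<forall>x\<in>E. \<forall>y\<in>E. \<forall>z\<in>E. x \<le> y \<longrightarrow> gmul x z \<le> gmul y z) \<and>
     \<comment> \<open>(RG2) locally compact (topological) group for the induced topology\<close>
     continuous_on (E \<times> E) (\<lambda>(x, y). gmul x y) \<and> continuous_on E iv \<and>
     locally_compact_space (top_of_set E) \<and>
     \<comment> \<open>(RG3)\<close>
     (\<exists>h m. continuous_on E h \<and> (\<forall>x\<in>E. 0 < h x) \<and>
        (\<forall>x\<in>E. \<forall>y\<in>E. h (gmul x y) = h x * h y) \<and>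
        (\<exists>x\<in>E. \<exists>y\<in>E. h x \<noteq> h y) \<and>
        haar_measure_on E gmul m \<and>
        (\<forall>\<alpha>\<in>E. (\<integral>\<^sup>+x. indicator {\<epsilon>\<in>E. \<alpha> \<le> \<epsilon>} x * ennreal (h x) \<partial>m) < \<infinity>))"

text \<open>The filter of the limit \<open>\<epsilon> \<rightarrow> \<theta> = inf E\<close>, \<open>\<epsilon>\<close> ranging over E.\<close>

definition theta_filter :: "real set \<Rightarrow> real filter" where
  "theta_filter E = (INF \<alpha>\<in>E. principal {\<epsilon>\<in>E. \<epsilon> \<le> \<alpha>})"

definition is_action ::
  "real set \<Rightarrow> (real \<Rightarrow> real \<Rightarrow> real) \<Rightarrow> real \<Rightarrow> (real \<Rightarrow> 'a \<Rightarrow> 'a) \<Rightarrow> bool" where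
  "is_action E gmul e H \<longleftrightarrow>
     (\<forall>\<epsilon>\<in>E. bij (H \<epsilon>)) \<and>
     (\<forall>\<epsilon>\<in>E. \<forall>\<epsilon>'\<in>E. H \<epsilon> \<circ> H \<epsilon>' = H (gmul \<epsilon> \<epsilon>')) \<and> H e = id"

definition continuous_action ::
  "real set \<Rightarrow> (real \<Rightarrow> 'a::topological_space \<Rightarrow> 'a) \<Rightarrow> bool" where
  "continuous_action E H \<longleftrightarrow> continuous_on (E \<times> UNIV) (\<lambda>(\<epsilon>, x). H \<epsilon> x)"

definition is_center ::
  "real set \<Rightarrow> (real \<Rightarrow> real) \<Rightarrow> (real \<Rightarrow> 'a::topological_space \<Rightarrow> 'a) \<Rightarrow> 'a \<Rightarrow> bool" where
  "is_center E iv H \<omega> \<longleftrightarrow>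
     (\<forall>V x. \<omega> \<in> interior V \<longrightarrow>
        (\<exists>U \<alpha>. x \<in> interior U \<and> \<alpha> \<in> E \<and>
           (\<forall>\<epsilon>\<in>E. \<epsilon> \<le> \<alpha> \<longrightarrow> H (iv \<epsilon>) ` U \<subseteq> V)))"

definition absorptive ::
  "real set \<Rightarrow> (real \<Rightarrow> real) \<Rightarrow> (real \<Rightarrow> 'a::topological_space \<Rightarrow> 'a) \<Rightarrow> bool" where
  "absorptive E iv H \<longleftrightarrow> (\<exists>\<omega>. is_center E iv H \<omega>)"

definition center ::
  "real set \<Rightarrow> (real \<Rightarrow> real) \<Rightarrow> (real \<Rightarrow> 'a::topological_space \<Rightarrow> 'a) \<Rightarrow> 'a" where
  "center E iv H = (THE \<omega>. is_center E iv H \<omega>)"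

definition balanced ::
  "real set \<Rightarrow> real \<Rightarrow> (real \<Rightarrow> real) \<Rightarrow> (real \<Rightarrow> 'a \<Rightarrow> 'a) \<Rightarrow> 'a set \<Rightarrow> bool" where
  "balanced E e iv H T \<longleftrightarrow> (\<forall>\<epsilon>\<in>E. \<epsilon> \<le> e \<longrightarrow> H (iv \<epsilon>) ` T \<subseteq> T)"

definition elementary ::
  "real set \<Rightarrow> real \<Rightarrow> (real \<Rightarrow> real) \<Rightarrow> (real \<Rightarrow> 'a::topological_space \<Rightarrow> 'a) \<Rightarrow> 'a set \<Rightarrow> bool" where
  "elementary E e iv H T \<longleftrightarrow>
     balanced E e iv H T \<and> compact (closure T) \<and> center E iv H \<in> interior T"

definition radon_measure :: "'a::topological_space measure \<Rightarrow> bool" where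
  "radon_measure lam \<longleftrightarrow>
     sets lam = sets borel \<and>
     (\<forall>K. compact K \<longrightarrow> emeasure lam K < \<infinity>) \<and>
     (\<forall>A\<in>sets borel. emeasure lam A = (INF U\<in>{U. open U \<and> A \<subseteq> U}. emeasure lam U)) \<and>
     (\<forall>U. open U \<longrightarrow> emeasure lam U = (SUP K\<in>{K. compact K \<and> K \<subseteq> U}. emeasure lam K))"

definition Kc :: "('a::topological_space \<Rightarrow> complex) set" where
  "Kc = {\<phi>. continuous_on UNIV \<phi> \<and> compact (closure {x. \<phi> x \<noteq> 0})}"

definition homogeneous_measure ::
  "real set \<Rightarrow> (real \<Rightarrow> 'a::topological_space \<Rightarrow> 'a) \<Rightarrow> 'a measure \<Rightarrow> bool" where
  "homogeneous_measure E H lam \<longleftrightarrow>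
     (\<forall>\<epsilon>\<in>E. \<exists>c::real. 0 < c \<and>
        (\<forall>\<phi>\<in>Kc. (\<integral>x. \<phi> (H \<epsilon> x) \<partial>lam) = complex_of_real c * (\<integral>x. \<phi> x \<partial>lam)))"

definition homogenizer ::
  "real set \<Rightarrow> (real \<Rightarrow> real \<Rightarrow> real) \<Rightarrow> real \<Rightarrow> (real \<Rightarrow> real)
     \<Rightarrow> (real \<Rightarrow> 'a::{t2_space, first_countable_topology} \<Rightarrow> 'a) \<Rightarrow> 'a measure \<Rightarrow> bool" where
  "homogenizer E gmul e iv H lam \<longleftrightarrow>
     locally_compact_space (euclidean :: 'a topology) \<and> \<not> compact (UNIV :: 'a set) \<and>
     R_group E gmul e iv \<and>
     is_action E gmul e H \<and> continuous_action E H \<and> absorptive E iv H \<and>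
     radon_measure lam \<and> homogeneous_measure E H lam \<and>
     lam \<noteq> null_measure borel \<and> \<not> (\<forall>A\<in>sets borel. emeasure lam A = indicator A (center E iv H))"

definition BC :: "('a::topological_space \<Rightarrow> complex) set" where
  "BC = {u. continuous_on UNIV u \<and> bounded (range u)}"

text \<open>\<open>u \<circ> H_\<epsilon> \<rightarrow> c\<close> weak-* in \<open>L^\<infinity>(X) = L^1(X)'\<close> as \<open>\<epsilon> \<rightarrow> \<theta>\<close>.\<close>

definition weakstar_mean ::
  "real set \<Rightarrow> (real \<Rightarrow> 'a \<Rightarrow> 'a) \<Rightarrow> 'a measure \<Rightarrow> ('a \<Rightarrow> complex) \<Rightarrow> complex \<Rightarrow> bool" where
  "weakstar_mean E H lam u c \<longleftrightarrow>
     (\<forall>g::'a \<Rightarrow> complex. integrable lam g \<longrightarrow>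
        ((\<lambda>\<epsilon>. \<integral>x. u (H \<epsilon> x) * g x \<partial>lam) \<longlongrightarrow> c * (\<integral>x. g x \<partial>lam)) (theta_filter E))"

definition Pi_inf ::
  "real set \<Rightarrow> (real \<Rightarrow> 'a::topological_space \<Rightarrow> 'a) \<Rightarrow> 'a measure \<Rightarrow> ('a \<Rightarrow> complex) set" where
  "Pi_inf E H lam = {u \<in> BC. \<exists>c. weakstar_mean E H lam u c}"

definition mean_value ::
  "real set \<Rightarrow> (real \<Rightarrow> 'a \<Rightarrow> 'a) \<Rightarrow> 'a measure \<Rightarrow> ('a \<Rightarrow> complex) \<Rightarrow> complex" where
  "mean_value E H lam u = (THE c. weakstar_mean E H lam u c)"

definition lp_integral :: "'a measure \<Rightarrow> real \<Rightarrow> 'a set \<Rightarrow> ('a \<Rightarrow> complex) \<Rightarrow> ennreal" where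
  "lp_integral lam p A f = (\<integral>\<^sup>+x. indicator A x * ennreal (cmod (f x) powr p) \<partial>lam)"

definition Lp_loc :: "'a::topological_space measure \<Rightarrow> real \<Rightarrow> ('a \<Rightarrow> complex) set" where
  "Lp_loc lam p = {u. u \<in> borel_measurable lam \<and> (\<forall>K. compact K \<longrightarrow> lp_integral lam p K u < \<infinity>)}"

definition Xi ::
  "real set \<Rightarrow> real \<Rightarrow> (real \<Rightarrow> 'a::topological_space \<Rightarrow> 'a) \<Rightarrow> 'a measure \<Rightarrow> real \<Rightarrow> ('a \<Rightarrow> complex) set" where
  "Xi E e H lam p = {u \<in> Lp_loc lam p. \<forall>K. compact K \<longrightarrow>
      (SUP \<epsilon>\<in>{\<epsilon>\<in>E. \<epsilon> \<le> e}. lp_integral lam p K (u \<circ> H \<epsilon>)) < \<infinity>}"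

definition Xi_norm ::
  "real set \<Rightarrow> real \<Rightarrow> (real \<Rightarrow> 'a \<Rightarrow> 'a) \<Rightarrow> 'a measure \<Rightarrow> real \<Rightarrow> 'a set \<Rightarrow> ('a \<Rightarrow> complex) \<Rightarrow> real" where
  "Xi_norm E e H lam p B u =
     enn2real (SUP \<epsilon>\<in>{\<epsilon>\<in>E. \<epsilon> \<le> e}. lp_integral lam p B (u \<circ> H \<epsilon>)) powr (1 / p)"

text \<open>Closure of \<open>\<Pi>^\<infinity>\<close> in \<open>\<Xi>^p\<close> (with the norm built on B).\<close>

definition frakX ::
  "real set \<Rightarrow> real \<Rightarrow> (real \<Rightarrow> 'a::topological_space \<Rightarrow> 'a) \<Rightarrow> 'a measure \<Rightarrow> real \<Rightarrow> 'a set \<Rightarrow> ('a \<Rightarrow> complex) set" where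
  "frakX E e H lam p B = {u \<in> Xi E e H lam p.
      \<forall>\<delta>>0. \<exists>v\<in>Pi_inf E H lam. Xi_norm E e H lam p B (\<lambda>x. u x - v x) < \<delta>}"

text \<open>Weak convergence in \<open>L^p(\<Omega>)\<close>, \<open>1 \<le> p < \<infinity>\<close>: test functions range over
  \<open>L^{p'}(\<Omega>)\<close> (with \<open>L^\<infinity>\<close> for p = 1).\<close>

definition dual_test :: "'a measure \<Rightarrow> real \<Rightarrow> 'a set \<Rightarrow> ('a \<Rightarrow> complex) \<Rightarrow> bool" where
  "dual_test lam p \<Omega> g \<longleftrightarrow> g \<in> borel_measurable lam \<and>
     (if p = 1 then (\<exists>C. AE x in lam. x \<in> \<Omega> \<longrightarrow> cmod (g x) \<le> C)
      else lp_integral lam (p / (p - 1)) \<Omega> g < \<infinity>)"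

definition weak_Lp_conv ::
  "'a measure \<Rightarrow> real \<Rightarrow> 'a set \<Rightarrow> ('b \<Rightarrow> 'a \<Rightarrow> complex) \<Rightarrow> ('a \<Rightarrow> complex) \<Rightarrow> 'b filter \<Rightarrow> bool" where
  "weak_Lp_conv lam p \<Omega> f l F \<longleftrightarrow>
     (\<forall>\<^sub>F \<epsilon> in F. f \<epsilon> \<in> borel_measurable lam \<and> lp_integral lam p \<Omega> (f \<epsilon>) < \<infinity>) \<and>
     (\<forall>g. dual_test lam p \<Omega> g \<longrightarrow>
        ((\<lambda>\<epsilon>. set_lebesgue_integral lam \<Omega> (\<lambda>x. f \<epsilon> x * g x))
           \<longlongrightarrow> set_lebesgue_integral lam \<Omega> (\<lambda>x. l x * g x)) F)"

definition cont_lin_extension ::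
  "real set \<Rightarrow> real \<Rightarrow> (real \<Rightarrow> 'a::topological_space \<Rightarrow> 'a) \<Rightarrow> 'a measure \<Rightarrow> real \<Rightarrow> 'a set
     \<Rightarrow> (('a \<Rightarrow> complex) \<Rightarrow> complex) \<Rightarrow> bool" where
  "cont_lin_extension E e H lam p B M' \<longleftrightarrow>
     (\<forall>u\<in>frakX E e H lam p B. \<forall>v\<in>frakX E e H lam p B. M' (\<lambda>x. u x + v x) = M' u + M' v) \<and>
     (\<forall>u\<in>frakX E e H lam p B. \<forall>c. M' (\<lambda>x. c * u x) = c * M' u) \<and>
     (\<exists>C. \<forall>u\<in>frakX E e H lam p B. cmod (M' u) \<le> C * Xi_norm E e H lam p B u) \<and>
     (\<forall>u\<in>Pi_inf E H lam. M' u = mean_value E H lam u)"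

end

theory Submission
  imports Defs
begin

(* Idea of the proof.
   (1) Homogeneity of lam says that each H_beta scales the integrals of
       compactly supported continuous functions by a constant c > 0; by
       regularity of the Radon measure lam this yields c lam(A) <= lam(H_beta^-1 A).
       Absorption puts every compact K inside some H_beta(B), so for eps near
       theta we get the local bound  int_K |w o H_eps|^p <= C ||w||_Xi^p.
   (2) With Hoelder's inequality, for a test function g on a relatively compact
       open set Omega, the pairings  int_Omega (w o H_eps) g  are eventually
       bounded by D ||w||_Xi, uniformly in eps.
   (3) For v in Pi^inf these pairings converge to M(v) int_Omega g.
   (4) Since Pi^inf is dense in frakX^p and C is complete, (2) and (3) give the
       convergence of the pairings for every u in frakX^p.
   The extension is  M(u) = lim (1 / lam B) int_B u o H_eps ; linearity, the
   bound, the extension property, uniqueness and weak convergence follow from (4). *)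

lemma Hausdorff_space_euclidean_t2: "Hausdorff_space (euclidean :: 'a::t2_space topology)"
  unfolding Hausdorff_space_def disjnt_def
proof (intro allI impI)
  fix x y :: 'a assume "x \<in> topspace euclidean \<and> y \<in> topspace euclidean \<and> x \<noteq> y"
  then obtain U V where "open U" "open V" "x \<in> U" "y \<in> V" "U \<inter> V = {}"
    using separation_t2[of x y] by blast
  then show "\<exists>U V. openin euclidean U \<and> openin euclidean V \<and> x \<in> U \<and> y \<in> V \<and> U \<inter> V = {}"
    by (intro exI[of _ U] exI[of _ V]) simp
qed

lemma compact_open_sandwich:
  fixes K U :: "'a::t2_space set"
  assumes lc: "locally_compact_space (euclidean :: 'a topology)"
    and K: "compact K" and U: "open U" and KU: "K \<subseteq> U"
  obtains V L where "open V" "compact L" "K \<subseteq> V" "V \<subseteq> L" "L \<subseteq> U"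
proof -
  have lcU: "locally_compact_space (top_of_set U)"
    using locally_compact_space_open_subset[OF disjI1[OF Hausdorff_space_euclidean_t2] lc]
      open_openin U by blast
  have HU: "Hausdorff_space (top_of_set U)"
    using Hausdorff_space_subtopology[OF Hausdorff_space_euclidean_t2] .
  have "compactin (top_of_set U) K" unfolding compactin_subtopology using K KU by simp
  then obtain V L where VL: "openin (top_of_set U) V" "compactin (top_of_set U) L" "K \<subseteq> V" "V \<subseteq> L"
    using iffD1[OF locally_compact_space_compact_closed_compact[OF disjI1[OF HU]] lcU,
        rule_format, OF \<open>compactin (top_of_set U) K\<close>] by blast
  have "open V" using openin_open_trans[OF VL(1) U] .
  moreover have "compact L" "L \<subseteq> U" using VL(2) unfolding compactin_subtopology by auto
  ultimately show ?thesis using that[of V L] VL(3,4) by simp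
qed

lemma urysohn_bump:
  fixes K U :: "'a::t2_space set"
  assumes lc: "locally_compact_space (euclidean :: 'a topology)"
    and K: "compact K" and U: "open U" and KU: "K \<subseteq> U"
  obtains f :: "'a \<Rightarrow> real" where "continuous_on UNIV f" "\<And>x. 0 \<le> f x \<and> f x \<le> 1"
    "\<And>x. x \<in> K \<Longrightarrow> f x = 1" "\<And>x. x \<notin> U \<Longrightarrow> f x = 0" "compact (closure {x. f x \<noteq> 0})"
proof -
  obtain V L where Vo: "open V" and L: "compact L" and VL: "K \<subseteq> V" "V \<subseteq> L" and LU: "L \<subseteq> U"
    using compact_open_sandwich[OF lc K U KU] by blast
  have cr: "completely_regular_space (euclidean :: 'a topology)"
    using locally_compact_regular_imp_completely_regular_space[OF lc disjI1[OF Hausdorff_space_euclidean_t2]] .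
  obtain f where f: "continuous_map euclidean (top_of_set {0..1::real}) f"
      "f ` (- V) \<subseteq> {0}" "f ` K \<subseteq> {1}"
  proof (rule Urysohn_completely_regular_compact_closed[of 0 1 euclidean K "- V"])
    show "closedin euclidean (- V)" using closed_Compl[OF Vo] by simp
    show "compactin euclidean K" using K by simp
    show "disjnt K (- V)" using VL(1) by (auto simp: disjnt_def)
    show "completely_regular_space (euclidean :: 'a topology)" by (rule cr)
  qed (use that in auto)
  have "{x. f x \<noteq> 0} \<subseteq> L" using f(2) VL(2) by blast
  then have "closure {x. f x \<noteq> 0} \<subseteq> L"
    using closure_minimal compact_imp_closed[OF L(1)] by blast
  then have compact_support: "compact (closure {x. f x \<noteq> 0})"
    using L(1) compact_Int_closed[of L "closure {x. f x \<noteq> 0}"] by (simp add: Int_absorb1)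
  show ?thesis
  proof (rule that)
    show "continuous_on UNIV f"
      using f(1) by (simp add: continuous_map_in_subtopology continuous_map_iff_continuous)
    show "0 \<le> f x \<and> f x \<le> 1" for x
      using f(1) unfolding continuous_map_in_subtopology by auto
    show "f x = 1" if "x \<in> K" for x
      using f(3) that by blast
    show "f x = 0" if "x \<notin> U" for x
      using f(2) VL(2) LU that by blast
  qed (rule compact_support)
qed

text \<open>This is the completeness argument behind the density
  extension.\<close>

lemma limit_by_approximation:
  fixes s :: "'b \<Rightarrow> complex" and m :: "'c \<Rightarrow> complex" and d :: "'c \<Rightarrow> real"
  assumes F: "F \<noteq> bot"
    and dense: "\<And>\<delta>. \<delta> > 0 \<Longrightarrow> \<exists>v\<in>T. d v < \<delta>"
    and close: "\<And>v \<eta>. v \<in> T \<Longrightarrow> \<eta> > 0 \<Longrightarrow> eventually (\<lambda>\<epsilon>. cmod (s \<epsilon> - m v) \<le> d v + \<eta>) F"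
  obtains l where "(s \<longlongrightarrow> l) F" "\<And>v. v \<in> T \<Longrightarrow> cmod (l - m v) \<le> d v"
proof -
  have "cauchy_filter (filtermap s F)"
    unfolding cauchy_filter_metric_filtermap
  proof (intro allI impI)
    fix r :: real assume "r > 0"
    then obtain v where v: "v \<in> T" "d v < r / 3" using dense[of "r / 3"] by auto
    have "eventually (\<lambda>\<epsilon>. cmod (s \<epsilon> - m v) \<le> d v + r / 6) F" using close[OF v(1)] \<open>r > 0\<close> by simp
    moreover have "dist (s x) (s y) < r"
      if "cmod (s x - m v) \<le> d v + r / 6" "cmod (s y - m v) \<le> d v + r / 6" for x y
      using that v(2) norm_triangle_ineq4[of "s x - m v" "s y - m v"] by (simp add: dist_norm)
    ultimately show "\<exists>P. eventually P F \<and> (\<forall>x y. P x \<and> P y \<longrightarrow> dist (s x) (s y) < r)" by blast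
  qed
  moreover have "filtermap s F \<noteq> bot" using F by (simp add: filtermap_bot_iff)
  ultimately obtain l where "filtermap s F \<le> nhds l"
    using cauchy_filter_complete_converges[OF _ complete_UNIV] by auto
  then have lim: "(s \<longlongrightarrow> l) F" by (simp add: filterlim_def)
  have "cmod (l - m v) \<le> d v" if v: "v \<in> T" for v
  proof (rule field_le_epsilon)
    fix \<eta> :: real assume "\<eta> > 0"
    have "((\<lambda>\<epsilon>. cmod (s \<epsilon> - m v)) \<longlongrightarrow> cmod (l - m v)) F" by (intro tendsto_intros lim)
    then show "cmod (l - m v) \<le> d v + \<eta>"
      using tendsto_upperbound close[OF v \<open>\<eta> > 0\<close>] F by blast
  qed
  with lim that show ?thesis by blast
qed

lemma le_zero_by_density:
  fixes x :: real and dist_to :: "'c \<Rightarrow> real"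
  assumes K: "K \<ge> 0" and dense: "\<And>\<delta>. \<delta> > 0 \<Longrightarrow> \<exists>v\<in>T. dist_to v < \<delta>"
    and dist_nonneg: "\<And>v. 0 \<le> dist_to v" and bound: "\<And>v. v \<in> T \<Longrightarrow> x \<le> K * dist_to v"
  shows "x \<le> 0"
proof (rule field_le_epsilon)
  fix \<eta> :: real assume "\<eta> > 0"
  then obtain v where v: "v \<in> T" "dist_to v < \<eta> / (K + 1)" using dense[of "\<eta> / (K + 1)"] K by auto
  then have "(K + 1) * dist_to v < \<eta>" using K by (simp add: field_simps)
  moreover have "K * dist_to v \<le> (K + 1) * dist_to v" using dist_nonneg[of v] by (simp add: distrib_right)
  ultimately show "x \<le> 0 + \<eta>" using bound[OF v(1)] by simp
qed

lemma eventually_theta_filter: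
  assumes "E \<noteq> {}"
  shows "eventually P (theta_filter E) \<longleftrightarrow> (\<exists>\<alpha>\<in>E. \<forall>\<epsilon>\<in>E. \<epsilon> \<le> \<alpha> \<longrightarrow> P \<epsilon>)"
proof -
  have "eventually P (theta_filter E) \<longleftrightarrow> (\<exists>b\<in>E. eventually P (principal {\<epsilon> \<in> E. \<epsilon> \<le> b}))"
    unfolding theta_filter_def
  proof (rule eventually_INF_base)
    fix a b assume "a \<in> E" "b \<in> E"
    then show "\<exists>x\<in>E. principal {\<epsilon> \<in> E. \<epsilon> \<le> x} \<le>
        inf (principal {\<epsilon> \<in> E. \<epsilon> \<le> a}) (principal {\<epsilon> \<in> E. \<epsilon> \<le> b})"
      by (intro bexI[of _ "min a b"]) (auto simp: min_def)
  qed (use assms in auto)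
  then show ?thesis by (auto simp: eventually_principal)
qed

lemma theta_filter_nontrivial: "E \<noteq> {} \<Longrightarrow> theta_filter E \<noteq> bot"
  using eventually_theta_filter[of E "\<lambda>_. False"] by (auto simp: trivial_limit_def)

lemma eventually_theta_below: "\<alpha> \<in> E \<Longrightarrow> eventually (\<lambda>\<epsilon>. \<epsilon> \<in> E \<and> \<epsilon> \<le> \<alpha>) (theta_filter E)"
  using eventually_theta_filter[of E] by auto

text \<open>The center of an absorptive action on a Hausdorff space is unique, so \<open>center\<close> is one.\<close>

lemma is_center_unique:
  fixes H :: "real \<Rightarrow> 'a::t2_space \<Rightarrow> 'a"
  assumes w: "is_center E iv H \<omega>" and w': "is_center E iv H \<omega>'"
  shows "\<omega>' = \<omega>"
proof (rule ccontr)
  assume "\<omega>' \<noteq> \<omega>"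
  then obtain V1 V2 where V: "open V1" "open V2" "\<omega>' \<in> V1" "\<omega> \<in> V2" "V1 \<inter> V2 = {}"
    by (metis hausdorff)
  then have "\<omega>' \<in> interior V1" "\<omega> \<in> interior V2" by (simp_all add: interior_open)
  fix x :: 'a
  obtain U1 a1 where U1: "x \<in> interior U1" "a1 \<in> E" "\<forall>\<epsilon>\<in>E. \<epsilon> \<le> a1 \<longrightarrow> H (iv \<epsilon>) ` U1 \<subseteq> V1"
    using w'[unfolded is_center_def, rule_format, OF \<open>\<omega>' \<in> interior V1\<close>, of x] by blast
  obtain U2 a2 where U2: "x \<in> interior U2" "a2 \<in> E" "\<forall>\<epsilon>\<in>E. \<epsilon> \<le> a2 \<longrightarrow> H (iv \<epsilon>) ` U2 \<subseteq> V2"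
    using w[unfolded is_center_def, rule_format, OF \<open>\<omega> \<in> interior V2\<close>, of x] by blast
  define m where "m = min a1 a2"
  have "m \<in> E" "m \<le> a1" "m \<le> a2" using U1(2) U2(2) by (auto simp: m_def min_def)
  moreover have "x \<in> U1" "x \<in> U2" using U1(1) U2(1) interior_subset by blast+
  ultimately have "H (iv m) x \<in> V1 \<inter> V2" using U1(3) U2(3) by (meson image_subset_iff IntI)
  then show False using V(5) by simp
qed

lemma center_is_center:
  fixes H :: "real \<Rightarrow> 'a::t2_space \<Rightarrow> 'a"
  assumes "absorptive E iv H"
  shows "is_center E iv H (center E iv H)"
proof -
  obtain \<omega> where w: "is_center E iv H \<omega>" using assms unfolding absorptive_def by blast
  show ?thesis
    unfolding center_def by (rule theI[of _ \<omega>]) (use w is_center_unique in blast)+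
qed

subsection \<open>Radon measures scaled by a homeomorphism\<close>

lemma ennreal_integral_le_nn_integral:
  fixes f :: "'a \<Rightarrow> real"
  assumes "f \<in> borel_measurable M" "\<And>x. 0 \<le> f x"
  shows "ennreal (integral\<^sup>L M f) \<le> (\<integral>\<^sup>+x. ennreal (f x) \<partial>M)"
proof -
  have "integral\<^sup>L M f = enn2real (\<integral>\<^sup>+ x. ennreal (f x) \<partial>M)"
    using integral_eq_nn_integral[of f M] assms by simp
  then show ?thesis by (simp add: ennreal_enn2real_if)
qed

lemma radon_measure_sets: "radon_measure lam \<Longrightarrow> sets lam = sets borel"
  unfolding radon_measure_def by simp

lemma radon_measure_compact_finite:
  assumes "radon_measure lam" "compact K" shows "emeasure lam K < \<infinity>"
  using assms(1)[unfolded radon_measure_def, THEN conjunct2, THEN conjunct1, rule_format, OF assms(2)] .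

lemma radon_measure_outer:
  assumes "radon_measure lam" "A \<in> sets borel"
  shows "emeasure lam A = (INF U\<in>{U. open U \<and> A \<subseteq> U}. emeasure lam U)"
  using assms(1)[unfolded radon_measure_def, THEN conjunct2, THEN conjunct2, THEN conjunct1,
      rule_format, OF assms(2)] .

lemma radon_measure_inner:
  assumes "radon_measure lam" "open U"
  shows "emeasure lam U = (SUP K\<in>{K. compact K \<and> K \<subseteq> U}. emeasure lam K)"
  using assms(1)[unfolded radon_measure_def, THEN conjunct2, THEN conjunct2, THEN conjunct2,
      rule_format, OF assms(2)] .

lemma radon_bump_integrable:
  fixes f :: "'a::t2_space \<Rightarrow> real"
  assumes radon: "radon_measure lam" and f: "continuous_on UNIV f" "\<And>x. 0 \<le> f x \<and> f x \<le> 1"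
    and supp: "compact (closure {x. f x \<noteq> 0})"
  shows "integrable lam f"
proof -
  define L where "L = closure {x. f x \<noteq> 0}"
  have f_meas: "f \<in> borel_measurable lam"
    using borel_measurable_continuous_onI[OF f(1)] measurable_cong_sets[OF radon_measure_sets[OF radon] refl]
    by blast
  have "(\<integral>\<^sup>+x. ennreal (f x) \<partial>lam) \<le> (\<integral>\<^sup>+x. indicator L x \<partial>lam)"
    using f(2) closure_subset[of "{x. f x \<noteq> 0}"]
    by (intro nn_integral_mono) (auto simp: L_def indicator_def)
  also have "\<dots> = emeasure lam L" using radon_measure_sets[OF radon] by (simp add: L_def)
  also have "\<dots> < \<infinity>" using radon_measure_compact_finite[OF radon supp] by (simp add: L_def)
  finally show ?thesis using integrableI_nonneg[OF f_meas] f(2) by auto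
qed

text \<open>This is
  what homogeneity of \<open>\<lambda>\<close> provides for each \<open>H\<^sub>\<beta>\<close>.\<close>

locale radon_homeo_scaling =
  fixes lam :: "'a::t2_space measure" and h g :: "'a \<Rightarrow> 'a" and c :: real
  assumes lc: "locally_compact_space (euclidean :: 'a topology)"
    and radon: "radon_measure lam"
    and h_cont: "continuous_on UNIV h" and g_cont: "continuous_on UNIV g"
    and g_h: "\<And>x. g (h x) = x" and h_g: "\<And>x. h (g x) = x"
    and c_pos: "0 < c"
    and scale: "\<And>\<phi>. \<phi> \<in> Kc \<Longrightarrow> (\<integral>x. \<phi> (h x) \<partial>lam) = complex_of_real c * (\<integral>x. \<phi> x \<partial>lam)"
begin

lemma lam_sets: "sets lam = sets borel"
  using radon by (rule radon_measure_sets)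

lemma measurable_lam: "f \<in> borel_measurable borel \<Longrightarrow> f \<in> borel_measurable lam"
  using measurable_cong_sets[OF lam_sets refl] by blast

lemma h_measurable: "h \<in> measurable lam borel"
  using borel_measurable_continuous_onI[OF h_cont] measurable_cong_sets[OF lam_sets refl] by blast

lemma h_image: "h ` S = g -` S"
proof safe
  fix x assume "x \<in> S" then show "h x \<in> g -` S" using g_h by simp
next
  fix y assume "g y \<in> S" then show "y \<in> h ` S" using h_g[of y] by force
qed

lemma h_vimage_image: "h -` (h ` S) = S"
proof -
  have "inj h" using g_h by (rule inj_on_inverseI)
  then show ?thesis by (rule inj_vimage_image_eq)
qed

text \<open>Integration against an Urysohn function gives the inequality for a compact set inside
  an open one.\<close>

lemma scaling_compact_open:
  assumes K: "compact K" and U: "open U" "K \<subseteq> U"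
  shows "ennreal c * emeasure lam K \<le> emeasure lam (h -` U)"
proof -
  obtain f :: "'a \<Rightarrow> real" where f: "continuous_on UNIV f" "\<And>x. 0 \<le> f x \<and> f x \<le> 1"
      "\<And>x. x \<in> K \<Longrightarrow> f x = 1" "\<And>x. x \<notin> U \<Longrightarrow> f x = 0" "compact (closure {x. f x \<noteq> 0})"
    using urysohn_bump[OF lc K U] by blast
  have f_int: "integrable lam f" using radon_bump_integrable[OF radon f(1,2,5)] .
  have fh_meas: "(\<lambda>x. f (h x)) \<in> borel_measurable lam"
    using measurable_compose[OF h_measurable borel_measurable_continuous_onI[OF f(1)]] .
  have "(\<lambda>x. complex_of_real (f x)) \<in> Kc"
    unfolding Kc_def using f(1,5) by (auto intro!: continuous_intros)
  from scale[OF this]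
  have "complex_of_real (\<integral>x. f (h x) \<partial>lam) = complex_of_real (c * integral\<^sup>L lam f)"
    by simp
  then have eq: "(\<integral>x. f (h x) \<partial>lam) = c * integral\<^sup>L lam f" by (rule of_real_eq_iff[THEN iffD1])
  have "emeasure lam K = (\<integral>\<^sup>+x. indicator K x \<partial>lam)"
    using lam_sets compact_imp_closed[OF K] by simp
  also have "\<dots> \<le> (\<integral>\<^sup>+x. ennreal (f x) \<partial>lam)"
    using f(3) by (intro nn_integral_mono) (auto simp: indicator_def)
  also have "\<dots> = ennreal (integral\<^sup>L lam f)"
    using nn_integral_eq_integral[OF f_int] f(2) by simp
  finally have "ennreal c * emeasure lam K \<le> ennreal c * ennreal (integral\<^sup>L lam f)"
    by (simp add: mult_left_mono)
  also have "\<dots> = ennreal (c * integral\<^sup>L lam f)"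
    using c_pos f(2) Bochner_Integration.integral_nonneg[of lam f] by (simp add: ennreal_mult)
  also have "\<dots> \<le> (\<integral>\<^sup>+x. ennreal (f (h x)) \<partial>lam)"
    using ennreal_integral_le_nn_integral[OF fh_meas] f(2) eq by simp
  also have "\<dots> \<le> (\<integral>\<^sup>+x. indicator (h -` U) x \<partial>lam)"
    using f(2,4) by (intro nn_integral_mono) (auto simp: indicator_def)
  also have "\<dots> = emeasure lam (h -` U)"
    using measurable_sets[OF borel_measurable_continuous_onI[OF h_cont], of U] U(1) lam_sets by simp
  finally show ?thesis .
qed

lemma scaling_open:
  assumes U: "open U"
  shows "ennreal c * emeasure lam U \<le> emeasure lam (h -` U)"
proof -
  have "(SUP K\<in>{K. compact K \<and> K \<subseteq> U}. ennreal c * emeasure lam K) \<le> emeasure lam (h -` U)"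
    using scaling_compact_open U by (intro SUP_least) auto
  moreover have "emeasure lam U = (SUP K\<in>{K. compact K \<and> K \<subseteq> U}. emeasure lam K)"
    using radon_measure_inner[OF radon U] .
  ultimately show ?thesis by (simp add: SUP_mult_left_ennreal)
qed

text \<open>By outer regularity the inequality extends to all Borel sets.\<close>

lemma scaling_borel:
  assumes A: "A \<in> sets borel"
  shows "ennreal c * emeasure lam A \<le> emeasure lam (h -` A)"
proof -
  have "ennreal c * emeasure lam A \<le> emeasure lam V" if V: "open V" "h -` A \<subseteq> V" for V
  proof -
    have hV_open: "open (h ` V)"
      unfolding h_image using continuous_on_open_vimage[OF open_UNIV, of g] g_cont V(1) by simp
    have "A \<subseteq> h ` V" unfolding h_image using V(2) h_g by auto
    then have "ennreal c * emeasure lam A \<le> ennreal c * emeasure lam (h ` V)"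
      using hV_open lam_sets by (intro mult_left_mono emeasure_mono) auto
    also have "\<dots> \<le> emeasure lam V" using scaling_open[OF hV_open] h_vimage_image by simp
    finally show ?thesis .
  qed
  then have "ennreal c * emeasure lam A \<le> (INF V\<in>{V. open V \<and> h -` A \<subseteq> V}. emeasure lam V)"
    by (intro INF_greatest) auto
  also have "\<dots> = emeasure lam (h -` A)"
  proof -
    have "h -` A \<in> sets borel"
      using measurable_sets[OF borel_measurable_continuous_onI[OF h_cont] A] by simp
    then show ?thesis by (rule radon_measure_outer[OF radon, symmetric])
  qed
  finally show ?thesis .
qed

lemma scaling_nn_integral:
  assumes f: "f \<in> borel_measurable borel"
  shows "ennreal c * (\<integral>\<^sup>+x. f x \<partial>lam) \<le> (\<integral>\<^sup>+x. f (h x) \<partial>lam)"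
proof -
  have le: "scale_measure (ennreal c) lam \<le> distr lam borel h"
  proof -
    have "emeasure (scale_measure (ennreal c) lam) A \<le> emeasure (distr lam borel h) A" for A
    proof (cases "A \<in> sets borel")
      case True
      then show ?thesis
        using scaling_borel[OF True] emeasure_distr[OF h_measurable True] sets_eq_imp_space_eq[OF lam_sets]
        by simp
    qed (simp add: emeasure_notin_sets lam_sets)
    then show ?thesis
      unfolding le_measure_iff by (auto simp: le_fun_def lam_sets sets_eq_imp_space_eq[OF lam_sets])
  qed
  have "ennreal c * (\<integral>\<^sup>+x. f x \<partial>lam) = nn_integral (scale_measure (ennreal c) lam) f"
    using nn_integral_scale_measure[OF measurable_lam[OF f]] by simp
  also have "\<dots> \<le> nn_integral (distr lam borel h) f"
    by (rule nn_integral_mono_measure) (use le lam_sets in simp_all)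
  also have "\<dots> = (\<integral>\<^sup>+x. f (h x) \<partial>lam)"
    by (rule nn_integral_distr[OF h_measurable]) (use f in simp)
  finally show ?thesis .
qed

end

subsection \<open>\<open>L\<^sup>p\<close> integrals, Hoelder's inequality and dual pairings\<close>

lemma lp_integral_mono_set:
  "A \<subseteq> A' \<Longrightarrow> lp_integral M p A f \<le> lp_integral M p A' f"
  unfolding lp_integral_def by (intro nn_integral_mono) (auto simp: indicator_def)

lemma lp_integral_bounded:
  assumes "0 \<le> p" and "\<And>x. cmod (v x) \<le> C" and "A \<in> sets M"
  shows "lp_integral M p A v \<le> ennreal (C powr p) * emeasure M A"
proof -
  have "lp_integral M p A v \<le> (\<integral>\<^sup>+x. ennreal (C powr p) * indicator A x \<partial>M)"
    unfolding lp_integral_def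
  proof (intro nn_integral_mono)
    fix x
    have "cmod (v x) powr p \<le> C powr p" using assms(1) assms(2)[of x] by (intro powr_mono2) auto
    then show "indicator A x * ennreal (cmod (v x) powr p) \<le> ennreal (C powr p) * indicator A x"
      by (cases "x \<in> A") (auto intro: ennreal_leI)
  qed
  also have "\<dots> = ennreal (C powr p) * emeasure M A" using nn_integral_cmult_indicator[OF assms(3)] .
  finally show ?thesis .
qed

lemma powr_norm_diff_le:
  assumes "0 \<le> p"
  shows "cmod (a - b) powr p \<le> 2 powr p * (cmod a powr p + cmod b powr p)"
proof -
  have "cmod (a - b) powr p \<le> (2 * max (cmod a) (cmod b)) powr p"
    using norm_triangle_ineq4[of a b] assms by (intro powr_mono2) auto
  also have "\<dots> = 2 powr p * max (cmod a) (cmod b) powr p" by (simp add: powr_mult)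
  also have "max (cmod a) (cmod b) powr p \<le> cmod a powr p + cmod b powr p"
    by (cases "cmod a \<le> cmod b") (auto simp: max_def)
  then have "2 powr p * max (cmod a) (cmod b) powr p \<le> 2 powr p * (cmod a powr p + cmod b powr p)"
    by (intro mult_left_mono) auto
  finally show ?thesis .
qed

lemma lp_integral_diff:
  assumes p: "0 \<le> p" and fg: "f \<in> borel_measurable M" "g \<in> borel_measurable M" and A: "A \<in> sets M"
  shows "lp_integral M p A (\<lambda>x. f x - g x) \<le> ennreal (2 powr p) * (lp_integral M p A f + lp_integral M p A g)"
proof -
  have "lp_integral M p A (\<lambda>x. f x - g x) \<le> (\<integral>\<^sup>+x. ennreal (2 powr p) *
      (indicator A x * ennreal (cmod (f x) powr p) + indicator A x * ennreal (cmod (g x) powr p)) \<partial>M)"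
    unfolding lp_integral_def
  proof (intro nn_integral_mono)
    fix x
    have "ennreal (cmod (f x - g x) powr p) \<le> ennreal (2 powr p * (cmod (f x) powr p + cmod (g x) powr p))"
      using powr_norm_diff_le[OF p] by (rule ennreal_leI)
    then show "indicator A x * ennreal (cmod (f x - g x) powr p) \<le> ennreal (2 powr p) *
        (indicator A x * ennreal (cmod (f x) powr p) + indicator A x * ennreal (cmod (g x) powr p))"
      by (cases "x \<in> A") (auto simp: ennreal_mult ennreal_plus)
  qed
  also have "\<dots> = ennreal (2 powr p) * (lp_integral M p A f + lp_integral M p A g)"
    unfolding lp_integral_def using fg A by (simp add: nn_integral_add nn_integral_cmult)
  finally show ?thesis .
qed

lemma nn_integral_mult_zero_if_powr_zero:
  fixes f g :: "'a \<Rightarrow> real"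
  assumes fm: "f \<in> borel_measurable M" and gm: "g \<in> borel_measurable M" and f0: "\<And>x. 0 \<le> f x"
    and zero: "(\<integral>\<^sup>+x. ennreal (f x powr p) \<partial>M) = 0"
  shows "(\<integral>\<^sup>+x. ennreal (f x * g x) \<partial>M) = 0"
proof -
  have "AE x in M. ennreal (f x powr p) = 0"
    using zero by (subst (asm) nn_integral_0_iff_AE) (use fm in measurable)
  then have "AE x in M. f x * g x = 0" by eventually_elim (use f0 in auto)
  then have "(\<integral>\<^sup>+x. ennreal (f x * g x) \<partial>M) = (\<integral>\<^sup>+x. 0 \<partial>M)"
    by (intro nn_integral_cong_AE) auto
  then show ?thesis by simp
qed

text \<open>Young's inequality for \<open>x/a\<close> and \<open>y/b\<close>, multiplied out.\<close>

lemma young_scaled: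
  fixes x y a b p q :: real
  assumes pq: "p > 1" "q > 1" "1/p + 1/q = 1" and xy: "0 \<le> x" "0 \<le> y" and ab: "a > 0" "b > 0"
  shows "x * y \<le> a * b / (a powr p * p) * x powr p + a * b / (b powr q * q) * y powr q"
proof -
  have "(x / a) * (y / b) \<le> (x / a) powr p / p + (y / b) powr q / q"
    using Youngs_inequality[OF pq, of "x / a" "y / b"] xy ab by simp
  also have "\<dots> = x powr p / (a powr p * p) + y powr q / (b powr q * q)"
    using ab by (simp add: powr_divide)
  finally have "x * y / (a * b) \<le> x powr p / (a powr p * p) + y powr q / (b powr q * q)"
    by (simp add: field_simps)
  then have "x * y \<le> (a * b) * (x powr p / (a powr p * p) + y powr q / (b powr q * q))"
    using ab by (simp add: pos_divide_le_eq mult.commute)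
  then show ?thesis by (simp add: field_simps)
qed

text \<open>After normalising by \<open>A\<^sup>1\<^sup>/\<^sup>p\<close> and \<open>G\<^sup>1\<^sup>/\<^sup>q\<close> it is Young's
  inequality integrated.\<close>

lemma holder_nn:
  fixes f g :: "'a \<Rightarrow> real" and p q A G :: real
  assumes pq: "p > 1" "q > 1" "1/p + 1/q = 1"
    and fm: "f \<in> borel_measurable M" and gm: "g \<in> borel_measurable M"
    and f0: "\<And>x. 0 \<le> f x" and g0: "\<And>x. 0 \<le> g x"
    and A: "(\<integral>\<^sup>+x. ennreal (f x powr p) \<partial>M) = ennreal A" "0 \<le> A"
    and G: "(\<integral>\<^sup>+x. ennreal (g x powr q) \<partial>M) = ennreal G" "0 \<le> G"
  shows "(\<integral>\<^sup>+x. ennreal (f x * g x) \<partial>M) \<le> ennreal (A powr (1/p) * G powr (1/q))"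
proof (cases "A = 0 \<or> G = 0")
  case True
  then have "(\<integral>\<^sup>+x. ennreal (f x * g x) \<partial>M) = 0"
    using nn_integral_mult_zero_if_powr_zero[OF fm gm f0, of p]
      nn_integral_mult_zero_if_powr_zero[OF gm fm g0, of q] A(1) G(1) by (auto simp: mult.commute)
  then show ?thesis by simp
next
  case False
  then have Apos: "A > 0" and Gpos: "G > 0" using A(2) G(2) by auto
  define a b where "a = A powr (1/p)" and "b = G powr (1/q)"
  have ab: "a > 0" "b > 0" "a powr p = A" "b powr q = G"
    using Apos Gpos pq by (auto simp: a_def b_def powr_powr)
  define s t where "s = a * b / (A * p)" and "t = a * b / (G * q)"
  have st: "0 \<le> s" "0 \<le> t" using ab Apos Gpos pq by (auto simp: s_def t_def)
  have young: "f x * g x \<le> s * f x powr p + t * g x powr q" for x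
    using young_scaled[OF pq f0 g0 ab(1,2)] ab(3,4) by (simp add: s_def t_def)
  have "(\<integral>\<^sup>+x. ennreal (f x * g x) \<partial>M) \<le>
        (\<integral>\<^sup>+x. ennreal s * ennreal (f x powr p) + ennreal t * ennreal (g x powr q) \<partial>M)"
  proof (intro nn_integral_mono)
    fix x
    have "ennreal (f x * g x) \<le> ennreal (s * f x powr p + t * g x powr q)"
      using young by (rule ennreal_leI)
    then show "ennreal (f x * g x) \<le> ennreal s * ennreal (f x powr p) + ennreal t * ennreal (g x powr q)"
      using st by (simp add: ennreal_mult ennreal_plus)
  qed
  also have "\<dots> = ennreal s * ennreal A + ennreal t * ennreal G"
    using fm gm A(1) G(1) by (simp add: nn_integral_add nn_integral_cmult)
  also have "\<dots> = ennreal (s * A + t * G)"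
    using st A(2) G(2) by (simp add: ennreal_mult ennreal_plus)
  also have "s * A + t * G = a * b * (1/p + 1/q)"
    using Apos Gpos by (simp add: s_def t_def field_simps)
  finally show ?thesis using pq(3) by (simp add: a_def b_def)
qed

lemma set_integral_bound_by_nn_integral:
  fixes h :: "'a \<Rightarrow> complex"
  assumes hm: "h \<in> borel_measurable M" and \<Omega>: "\<Omega> \<in> sets M" and B: "0 \<le> B"
    and bound: "(\<integral>\<^sup>+x. indicator \<Omega> x * ennreal (cmod (h x)) \<partial>M) \<le> ennreal B"
  shows "set_integrable M \<Omega> h \<and> cmod (set_lebesgue_integral M \<Omega> h) \<le> B"
proof -
  define k where "k x = indicator \<Omega> x *\<^sub>R h x" for x
  have km: "k \<in> borel_measurable M" unfolding k_def using hm \<Omega> by measurable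
  have nk: "(\<integral>\<^sup>+x. ennreal (norm (k x)) \<partial>M) \<le> ennreal B"
    using bound by (simp add: k_def indicator_mult_ennreal mult.commute)
  then have ki: "integrable M k"
    using km by (intro integrableI_bounded) (auto simp: top_unique intro: order.strict_trans1)
  have "ennreal (norm (integral\<^sup>L M k)) \<le> ennreal B"
    using integral_norm_bound_ennreal[OF ki] nk by (rule order.trans)
  then have "norm (integral\<^sup>L M k) \<le> B" using B by (simp add: ennreal_le_iff)
  then show ?thesis using ki unfolding k_def set_integrable_def set_lebesgue_integral_def by simp
qed

lemma pairing_bound_L1_Linf:
  assumes \<Omega>: "\<Omega> \<in> sets M" and fm: "f \<in> borel_measurable M" and fin: "lp_integral M 1 \<Omega> f < \<infinity>"
    and C: "0 \<le> C" and g_bound: "AE x in M. x \<in> \<Omega> \<longrightarrow> cmod (g x) \<le> C"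
  shows "(\<integral>\<^sup>+x. indicator \<Omega> x * ennreal (cmod (f x * g x)) \<partial>M) \<le> ennreal (C * enn2real (lp_integral M 1 \<Omega> f))"
proof -
  have "(\<integral>\<^sup>+x. indicator \<Omega> x * ennreal (cmod (f x * g x)) \<partial>M) \<le>
      (\<integral>\<^sup>+x. ennreal C * (indicator \<Omega> x * ennreal (cmod (f x))) \<partial>M)"
  proof (rule nn_integral_mono_AE)
    show "AE x in M. indicator \<Omega> x * ennreal (cmod (f x * g x)) \<le> ennreal C * (indicator \<Omega> x * ennreal (cmod (f x)))"
      using g_bound
    proof eventually_elim
      case (elim x)
      have "x \<in> \<Omega> \<Longrightarrow> cmod (f x * g x) \<le> C * cmod (f x)"
        using elim by (simp add: norm_mult mult.commute[of C] mult_left_mono)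
      then show ?case using C by (cases "x \<in> \<Omega>") (auto simp: ennreal_mult[symmetric] intro: ennreal_leI)
    qed
  qed
  also have "\<dots> = ennreal C * lp_integral M 1 \<Omega> f"
  proof -
    have "(\<lambda>x. indicator \<Omega> x * ennreal (cmod (f x))) \<in> borel_measurable M" using fm \<Omega> by measurable
    then show ?thesis unfolding lp_integral_def by (simp add: nn_integral_cmult)
  qed
  also have "\<dots> = ennreal (C * enn2real (lp_integral M 1 \<Omega> f))"
    using fin C by (simp add: ennreal_mult)
  finally show ?thesis .
qed

lemma pairing_bound_Lp_Lq:
  assumes p: "1 < p" and \<Omega>: "\<Omega> \<in> sets M"
    and fm: "f \<in> borel_measurable M" and fin: "lp_integral M p \<Omega> f < \<infinity>"
    and gm: "g \<in> borel_measurable M" and gfin: "lp_integral M (p / (p - 1)) \<Omega> g < \<infinity>"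
  shows "(\<integral>\<^sup>+x. indicator \<Omega> x * ennreal (cmod (f x * g x)) \<partial>M) \<le>
      ennreal (enn2real (lp_integral M (p / (p - 1)) \<Omega> g) powr ((p - 1) / p) *
               enn2real (lp_integral M p \<Omega> f) powr (1/p))"
proof -
  define q where "q = p / (p - 1)"
  have q: "q > 1" "1/p + 1/q = 1" "1/q = (p - 1) / p" using p by (auto simp: q_def field_simps)
  have restrict: "(\<integral>\<^sup>+x. ennreal ((indicator \<Omega> x * cmod (k x)) powr r) \<partial>M) = ennreal (enn2real (lp_integral M r \<Omega> k))"
    if "lp_integral M r \<Omega> k < \<infinity>" for k r
  proof -
    have "(\<integral>\<^sup>+x. ennreal ((indicator \<Omega> x * cmod (k x)) powr r) \<partial>M) = lp_integral M r \<Omega> k"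
      unfolding lp_integral_def by (intro nn_integral_cong) (auto simp: indicator_def)
    then show ?thesis using that by simp
  qed
  have "(\<integral>\<^sup>+x. indicator \<Omega> x * ennreal (cmod (f x * g x)) \<partial>M) =
        (\<integral>\<^sup>+x. ennreal ((indicator \<Omega> x * cmod (f x)) * (indicator \<Omega> x * cmod (g x))) \<partial>M)"
    by (intro nn_integral_cong) (auto simp: indicator_def norm_mult)
  also have "\<dots> \<le> ennreal (enn2real (lp_integral M p \<Omega> f) powr (1/p) * enn2real (lp_integral M q \<Omega> g) powr (1/q))"
    by (rule holder_nn[OF p q(1) q(2)]) (use fm gm \<Omega> fin gfin restrict in \<open>auto simp: q_def\<close>)
  finally show ?thesis by (simp add: q(3) q_def mult.commute)
qed

lemma dual_test_pairing_bound:
  assumes p1: "1 \<le> p" and \<Omega>: "\<Omega> \<in> sets M" and dt: "dual_test M p \<Omega> g"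
  obtains C where "C \<ge> 0" "\<And>f. f \<in> borel_measurable M \<Longrightarrow> lp_integral M p \<Omega> f < \<infinity> \<Longrightarrow>
     set_integrable M \<Omega> (\<lambda>x. f x * g x) \<and>
     cmod (set_lebesgue_integral M \<Omega> (\<lambda>x. f x * g x)) \<le> C * enn2real (lp_integral M p \<Omega> f) powr (1/p)"
proof -
  have gm: "g \<in> borel_measurable M" using dt unfolding dual_test_def by simp
  obtain C where C: "C \<ge> 0" "\<And>f. f \<in> borel_measurable M \<Longrightarrow> lp_integral M p \<Omega> f < \<infinity> \<Longrightarrow>
     (\<integral>\<^sup>+x. indicator \<Omega> x * ennreal (cmod (f x * g x)) \<partial>M) \<le> ennreal (C * enn2real (lp_integral M p \<Omega> f) powr (1/p))"
  proof (cases "p = 1")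
    case True
    with dt obtain C0 where "AE x in M. x \<in> \<Omega> \<longrightarrow> cmod (g x) \<le> C0" unfolding dual_test_def by auto
    then have "AE x in M. x \<in> \<Omega> \<longrightarrow> cmod (g x) \<le> max C0 0" by eventually_elim auto
    with pairing_bound_L1_Linf[OF \<Omega>] True that[of "max C0 0"] show ?thesis by simp
  next
    case False
    with p1 dt have p: "1 < p" and gfin: "lp_integral M (p / (p - 1)) \<Omega> g < \<infinity>"
      unfolding dual_test_def by auto
    show ?thesis
      by (rule that[of "enn2real (lp_integral M (p / (p - 1)) \<Omega> g) powr ((p - 1) / p)"])
        (use pairing_bound_Lp_Lq[OF p \<Omega> _ _ gm gfin] in auto)
  qed
  show ?thesis
  proof (rule that[OF C(1)])
    fix f assume "f \<in> borel_measurable M" "lp_integral M p \<Omega> f < \<infinity>"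
    with set_integral_bound_by_nn_integral[OF _ \<Omega> _ C(2)] C(1) gm
    show "set_integrable M \<Omega> (\<lambda>x. f x * g x) \<and>
        cmod (set_lebesgue_integral M \<Omega> (\<lambda>x. f x * g x)) \<le> C * enn2real (lp_integral M p \<Omega> f) powr (1/p)"
      by simp
  qed
qed

locale homogenizer_elementary =
  fixes E :: "real set" and gmul :: "real \<Rightarrow> real \<Rightarrow> real" and e :: real
    and iv :: "real \<Rightarrow> real"
    and H :: "real \<Rightarrow> 'a::{t2_space, first_countable_topology} \<Rightarrow> 'a"
    and lam :: "'a measure" and p :: real and B :: "'a set"
  assumes hom: "homogenizer E gmul e iv H lam"
    and p1: "1 \<le> p"
    and B_open: "open B" and B_elem: "elementary E e iv H B"
begin

abbreviation "Xi_sp \<equiv> Xi E e H lam p"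
abbreviation "Xnorm \<equiv> Xi_norm E e H lam p B"
abbreviation "Pi_sp \<equiv> Pi_inf E H lam"
abbreviation "frakX_sp \<equiv> frakX E e H lam p B"
abbreviation "mean \<equiv> mean_value E H lam"
abbreviation "theta \<equiv> theta_filter E"

abbreviation "sup_B u \<equiv> (SUP \<epsilon>\<in>{\<epsilon>\<in>E. \<epsilon> \<le> e}. lp_integral lam p B (u \<circ> H \<epsilon>))"

lemma R_grp: "R_group E gmul e iv" using hom by (simp add: homogenizer_def)

lemma gmul_closed: "x \<in> E \<Longrightarrow> y \<in> E \<Longrightarrow> gmul x y \<in> E"
  and e_in_E: "e \<in> E" and iv_in_E: "x \<in> E \<Longrightarrow> iv x \<in> E"
  and gmul_comm: "x \<in> E \<Longrightarrow> y \<in> E \<Longrightarrow> gmul x y = gmul y x"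
  and gmul_inv: "x \<in> E \<Longrightarrow> gmul (iv x) x = e"
  and gmul_mono: "x \<in> E \<Longrightarrow> y \<in> E \<Longrightarrow> z \<in> E \<Longrightarrow> x \<le> y \<Longrightarrow> gmul x z \<le> gmul y z"
  using R_grp unfolding R_group_def by blast+

lemma E_nonempty: "E \<noteq> {}" using e_in_E by blast

lemma theta_nontrivial: "theta \<noteq> bot"
  using theta_filter_nontrivial[OF E_nonempty] .

lemma H_comp: "\<epsilon> \<in> E \<Longrightarrow> \<epsilon>' \<in> E \<Longrightarrow> H \<epsilon> (H \<epsilon>' x) = H (gmul \<epsilon> \<epsilon>') x"
  and H_e: "H e = id"
  using hom unfolding homogenizer_def is_action_def by (auto simp: fun_eq_iff)

lemma H_inv_left: "\<beta> \<in> E \<Longrightarrow> H \<beta> (H (iv \<beta>) x) = x"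
  using H_comp[of \<beta> "iv \<beta>" x] iv_in_E gmul_comm[of \<beta> "iv \<beta>"] gmul_inv[of \<beta>] H_e by simp

lemma H_inv_right: "\<beta> \<in> E \<Longrightarrow> H (iv \<beta>) (H \<beta> x) = x"
  using H_comp[of "iv \<beta>" \<beta> x] iv_in_E gmul_inv[of \<beta>] H_e by simp

lemma H_cont: "\<epsilon> \<in> E \<Longrightarrow> continuous_on UNIV (H \<epsilon>)"
proof -
  assume "\<epsilon> \<in> E"
  have "continuous_on (E \<times> UNIV) (\<lambda>(\<epsilon>, x). H \<epsilon> x)"
    using hom by (simp add: homogenizer_def continuous_action_def)
  then have "continuous_on UNIV ((\<lambda>(\<epsilon>, x). H \<epsilon> x) \<circ> (\<lambda>x. (\<epsilon>, x)))"
    using \<open>\<epsilon> \<in> E\<close> by (intro continuous_on_compose continuous_intros) (auto intro: continuous_on_subset)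
  then show ?thesis by (simp add: o_def)
qed

lemma H_image_open:
  assumes b: "\<beta> \<in> E" and S: "open S"
  shows "open (H \<beta> ` S)"
proof -
  have "H \<beta> ` S = H (iv \<beta>) -` S"
  proof safe
    fix x assume "x \<in> S" then show "H \<beta> x \<in> H (iv \<beta>) -` S" using H_inv_right[OF b] by simp
  next
    fix x assume "H (iv \<beta>) x \<in> S" then show "x \<in> H \<beta> ` S"
      using H_inv_left[OF b, of x] by (metis imageI)
  qed
  moreover have "open (H (iv \<beta>) -` S)"
    using continuous_on_open_vimage[OF open_UNIV, of "H (iv \<beta>)"] H_cont[OF iv_in_E[OF b]] S by simp
  ultimately show ?thesis by simp
qed

lemma lam_radon: "radon_measure lam" using hom by (simp add: homogenizer_def)

lemma lam_sets: "sets lam = sets borel"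
  using radon_measure_sets[OF lam_radon] .

lemma measurable_lam_iff: "f \<in> borel_measurable lam \<longleftrightarrow> f \<in> borel_measurable borel"
  using measurable_cong_sets[OF lam_sets refl] by blast

lemma compact_sets: "compact K \<Longrightarrow> K \<in> sets lam"
  using borel_closed[OF compact_imp_closed] lam_sets by simp

lemma comp_H_measurable: "u \<in> borel_measurable lam \<Longrightarrow> \<epsilon> \<in> E \<Longrightarrow> (\<lambda>x. u (H \<epsilon> x)) \<in> borel_measurable lam"
  using measurable_compose[OF borel_measurable_continuous_onI[OF H_cont]] measurable_lam_iff by blast

lemma H_scaling: "\<beta> \<in> E \<Longrightarrow> \<exists>c. radon_homeo_scaling lam (H \<beta>) (H (iv \<beta>)) c"
proof -
  assume b: "\<beta> \<in> E"
  have "homogeneous_measure E H lam" using hom by (simp add: homogenizer_def)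
  then obtain c where c: "0 < c" "\<And>\<phi>. \<phi> \<in> Kc \<Longrightarrow> (\<integral>x. \<phi> (H \<beta> x) \<partial>lam) = complex_of_real c * (\<integral>x. \<phi> x \<partial>lam)"
    using b unfolding homogeneous_measure_def by blast
  have "radon_homeo_scaling lam (H \<beta>) (H (iv \<beta>)) c"
    using hom c H_cont b iv_in_E H_inv_left H_inv_right lam_radon
    by unfold_locales (auto simp: homogenizer_def)
  then show ?thesis by blast
qed

lemma compact_in_H_image_B:
  assumes K: "compact K"
  shows "\<exists>\<beta>\<in>E. K \<subseteq> H \<beta> ` B"
proof -
  have "absorptive E iv H" using hom by (simp add: homogenizer_def)
  then have "is_center E iv H (center E iv H)" by (rule center_is_center)
  moreover have "center E iv H \<in> interior B" using B_elem by (simp add: elementary_def)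
  ultimately have "\<forall>x. \<exists>U \<alpha>. x \<in> interior U \<and> \<alpha> \<in> E \<and> (\<forall>\<epsilon>\<in>E. \<epsilon> \<le> \<alpha> \<longrightarrow> H (iv \<epsilon>) ` U \<subseteq> B)"
    unfolding is_center_def by blast
  then obtain U al where U: "\<And>x. x \<in> interior (U x)" "\<And>x. al x \<in> E"
     "\<And>x \<epsilon>. \<epsilon> \<in> E \<Longrightarrow> \<epsilon> \<le> al x \<Longrightarrow> H (iv \<epsilon>) ` U x \<subseteq> B"
    by metis
  have "K \<subseteq> (\<Union>x\<in>K. interior (U x))" using U(1) by blast
  then obtain F where F: "F \<subseteq> K" "finite F" "K \<subseteq> (\<Union>x\<in>F. interior (U x))"
    using compactE_image[OF K, of K "\<lambda>x. interior (U x)"] by (metis open_interior)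
  show ?thesis
  proof (cases "F = {}")
    case True
    then show ?thesis using F e_in_E by auto
  next
    case False
    define \<beta> where "\<beta> = Min (al ` F)"
    have "\<beta> \<in> al ` F" unfolding \<beta>_def using False F(2) by (intro Min_in) auto
    then have bE: "\<beta> \<in> E" using U(2) by blast
    have "y \<in> H \<beta> ` B" if "y \<in> K" for y
    proof -
      obtain x where x: "x \<in> F" "y \<in> interior (U x)" using F(3) \<open>y \<in> K\<close> by blast
      have "\<beta> \<le> al x" unfolding \<beta>_def using x(1) F(2) by simp
      then have "H (iv \<beta>) y \<in> B" using U(3)[OF bE] x(2) interior_subset by blast
      then show ?thesis using H_inv_left[OF bE, of y] by (metis imageI)
    qed
    then show ?thesis using bE by blast
  qed
qed

lemma B_sets: "B \<in> sets lam" using B_open lam_sets by simp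

lemma B_closure_compact: "compact (closure B)" using B_elem by (simp add: elementary_def)

lemma B_finite: "emeasure lam B < \<infinity>"
proof -
  have "emeasure lam B \<le> emeasure lam (closure B)"
    by (rule emeasure_mono) (use closure_subset lam_sets in auto)
  then show ?thesis using radon_measure_compact_finite[OF lam_radon B_closure_compact] by simp
qed

text \<open>If B were null, every compact set (lying in some \<open>H\<^sub>\<beta>(B)\<close>) would be null, and by inner
  regularity so would \<open>\<lambda>\<close>, which is excluded for a homogenizer.\<close>

lemma B_positive: "emeasure lam B > 0"
proof (rule ccontr)
  assume "\<not> emeasure lam B > 0"
  then have B0: "emeasure lam B = 0" by simp
  have K0: "emeasure lam K = 0" if K: "compact K" for K
  proof -
    obtain \<beta> where b: "\<beta> \<in> E" "K \<subseteq> H \<beta> ` B" using compact_in_H_image_B[OF K] by blast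
    obtain c where "radon_homeo_scaling lam (H \<beta>) (H (iv \<beta>)) c" using H_scaling[OF b(1)] by blast
    then interpret S: radon_homeo_scaling lam "H \<beta>" "H (iv \<beta>)" c .
    have o: "open (H \<beta> ` B)" using H_image_open[OF b(1) B_open] .
    have "ennreal c * emeasure lam (H \<beta> ` B) \<le> 0"
      using S.scaling_open[OF o] S.h_vimage_image B0 by simp
    then have "emeasure lam (H \<beta> ` B) = 0" using S.c_pos by (simp add: ennreal_zero_less_mult_iff le_zero_eq)
    moreover have "emeasure lam K \<le> emeasure lam (H \<beta> ` B)"
      by (rule emeasure_mono) (use b(2) o lam_sets in auto)
    ultimately show ?thesis by simp
  qed
  have "{K::'a set. compact K} \<noteq> {}" using compact_empty by blast
  then have "emeasure lam UNIV = 0"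
    using radon_measure_inner[OF lam_radon open_UNIV] K0 SUP_const[of _ "0::ennreal"] by simp
  then have "lam = null_measure borel"
  proof (intro measure_eqI)
    fix A assume "A \<in> sets lam"
    have "emeasure lam A \<le> emeasure lam UNIV" by (rule emeasure_mono) (auto simp: lam_sets)
    then show "emeasure lam A = emeasure (null_measure borel) A" using \<open>emeasure lam UNIV = 0\<close> by simp
  qed (simp add: lam_sets)
  moreover have "lam \<noteq> null_measure borel" using hom by (simp add: homogenizer_def)
  ultimately show False by blast
qed

subsection \<open>Step (1): the local bound by the \<open>\<Xi>\<^sup>p\<close>-norm\<close>

text \<open>For K compact pick \<open>\<beta>\<close> with \<open>K \<subseteq> H\<^sub>\<beta>(B)\<close>; substituting \<open>x = H\<^sub>\<beta> y\<close> turns the integral over K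
  of \<open>|w \<circ> H\<^sub>\<epsilon>|\<^sup>p\<close> into one over B of \<open>|w \<circ> H\<^sub>\<epsilon>\<^sub>\<beta>|\<^sup>p\<close>, and \<open>\<epsilon>\<beta> \<le> e\<close> once \<open>\<epsilon> \<le> \<beta>\<^sup>-\<^sup>1\<close>.\<close>

lemma local_Lp_bound:
  assumes K: "compact K"
  obtains \<alpha> C where "\<alpha> \<in> E" "C \<ge> 0" "\<And>(w :: 'a \<Rightarrow> complex) \<epsilon>. w \<in> borel_measurable lam \<Longrightarrow> \<epsilon> \<in> E \<Longrightarrow> \<epsilon> \<le> \<alpha> \<Longrightarrow>
      lp_integral lam p K (w \<circ> H \<epsilon>) \<le> ennreal C * sup_B w"
proof -
  obtain \<beta> where b: "\<beta> \<in> E" "K \<subseteq> H \<beta> ` B" using compact_in_H_image_B[OF K] by blast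
  obtain c where "radon_homeo_scaling lam (H \<beta>) (H (iv \<beta>)) c" using H_scaling[OF b(1)] by blast
  then interpret S: radon_homeo_scaling lam "H \<beta>" "H (iv \<beta>)" c .
  have scaled: "ennreal c * lp_integral lam p K (w \<circ> H \<epsilon>) \<le> sup_B w"
    if w: "w \<in> borel_measurable lam" and eps: "\<epsilon> \<in> E" "\<epsilon> \<le> iv \<beta>" for w :: "'a \<Rightarrow> complex" and \<epsilon>
  proof -
    define F where "F x = indicator (H \<beta> ` B) x * ennreal (cmod (w (H \<epsilon> x)) powr p)" for x
    have [measurable]: "(\<lambda>x. w (H \<epsilon> x)) \<in> borel_measurable borel"
      using comp_H_measurable[OF w eps(1)] measurable_lam_iff by blast
    have [measurable]: "H \<beta> ` B \<in> sets borel" using H_image_open[OF b(1) B_open] by simp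
    have Fm: "F \<in> borel_measurable borel" unfolding F_def by measurable
    have "lp_integral lam p K (w \<circ> H \<epsilon>) \<le> (\<integral>\<^sup>+x. F x \<partial>lam)"
      unfolding lp_integral_def F_def using b(2) by (intro nn_integral_mono) (auto simp: indicator_def)
    then have "ennreal c * lp_integral lam p K (w \<circ> H \<epsilon>) \<le> ennreal c * (\<integral>\<^sup>+x. F x \<partial>lam)"
      by (rule mult_left_mono) simp
    also have "\<dots> \<le> (\<integral>\<^sup>+x. F (H \<beta> x) \<partial>lam)" by (rule S.scaling_nn_integral[OF Fm])
    also have "(\<lambda>x. F (H \<beta> x)) = (\<lambda>x. indicator B x * ennreal (cmod ((w \<circ> H (gmul \<epsilon> \<beta>)) x) powr p))"
      using S.h_vimage_image H_comp[OF eps(1) b(1)]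
      by (auto simp: F_def fun_eq_iff indicator_def vimage_def)
    also have "(\<integral>\<^sup>+x. indicator B x * ennreal (cmod ((w \<circ> H (gmul \<epsilon> \<beta>)) x) powr p) \<partial>lam) \<le> sup_B w"
      unfolding lp_integral_def[symmetric]
    proof (rule SUP_upper)
      have "gmul \<epsilon> \<beta> \<le> gmul (iv \<beta>) \<beta>" using gmul_mono[OF eps(1) iv_in_E[OF b(1)] b(1) eps(2)] .
      then show "gmul \<epsilon> \<beta> \<in> {\<epsilon> \<in> E. \<epsilon> \<le> e}" using gmul_inv[OF b(1)] gmul_closed[OF eps(1) b(1)] by simp
    qed
    finally show ?thesis .
  qed
  show ?thesis
  proof (rule that[of "iv \<beta>" "1 / c"])
    fix w :: "'a \<Rightarrow> complex" and \<epsilon> assume "w \<in> borel_measurable lam" "\<epsilon> \<in> E" "\<epsilon> \<le> iv \<beta>"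
    then have "ennreal (1/c) * (ennreal c * lp_integral lam p K (w \<circ> H \<epsilon>)) \<le> ennreal (1/c) * sup_B w"
      using scaled by (simp add: mult_left_mono)
    then show "lp_integral lam p K (w \<circ> H \<epsilon>) \<le> ennreal (1 / c) * sup_B w"
      using S.c_pos by (simp add: mult.assoc[symmetric] ennreal_mult[symmetric])
  qed (use iv_in_E[OF b(1)] S.c_pos in auto)
qed

lemma Xi_measurable: "u \<in> Xi_sp \<Longrightarrow> u \<in> borel_measurable lam"
  unfolding Xi_def Lp_loc_def by simp

lemma Xi_sup_B_finite: assumes "u \<in> Xi_sp" shows "sup_B u < \<infinity>"
proof -
  have "sup_B u \<le> (SUP \<epsilon>\<in>{\<epsilon>\<in>E. \<epsilon> \<le> e}. lp_integral lam p (closure B) (u \<circ> H \<epsilon>))"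
    by (intro SUP_mono) (use lp_integral_mono_set[OF closure_subset] in blast)
  also have "\<dots> < \<infinity>" using assms B_closure_compact unfolding Xi_def by blast
  finally show ?thesis .
qed

lemma Xnorm_pow: assumes "u \<in> Xi_sp" shows "sup_B u = ennreal (Xnorm u powr p)"
proof -
  have "Xnorm u powr p = enn2real (sup_B u)"
    unfolding Xi_norm_def using p1 by (simp add: powr_powr)
  then show ?thesis using Xi_sup_B_finite[OF assms] by simp
qed

lemma Xnorm_nonneg: "Xnorm u \<ge> 0" unfolding Xi_norm_def by simp

lemma Xnorm_zero: "Xnorm (\<lambda>x. 0) = 0"
proof -
  have "{\<epsilon>\<in>E. \<epsilon> \<le> e} \<noteq> {}" using e_in_E by auto
  then show ?thesis unfolding Xi_norm_def lp_integral_def using p1 by (simp add: o_def)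
qed

text \<open>\<open>\<Xi>\<^sup>p\<close> is closed under differences, by the quasi-triangle inequality.\<close>

lemma Xi_diff:
  assumes u: "u \<in> Xi_sp" and v: "v \<in> Xi_sp"
  shows "(\<lambda>x. u x - v x) \<in> Xi_sp"
proof -
  have um: "u \<in> borel_measurable lam" and vm: "v \<in> borel_measurable lam"
    using u v by (simp_all add: Xi_measurable)
  have "lp_integral lam p K (\<lambda>x. u x - v x) < \<infinity>" if K: "compact K" for K
  proof -
    have "lp_integral lam p K (\<lambda>x. u x - v x) \<le> ennreal (2 powr p) * (lp_integral lam p K u + lp_integral lam p K v)"
      using lp_integral_diff[OF _ um vm compact_sets[OF K]] p1 by simp
    also have "\<dots> < \<infinity>" using u v K unfolding Xi_def Lp_loc_def by (simp add: ennreal_mult_less_top)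
    finally show ?thesis .
  qed
  moreover have "(SUP \<epsilon>\<in>{\<epsilon>\<in>E. \<epsilon> \<le> e}. lp_integral lam p K ((\<lambda>x. u x - v x) \<circ> H \<epsilon>)) < \<infinity>"
    if K: "compact K" for K
  proof -
    have "(SUP \<epsilon>\<in>{\<epsilon>\<in>E. \<epsilon> \<le> e}. lp_integral lam p K ((\<lambda>x. u x - v x) \<circ> H \<epsilon>)) \<le>
       (SUP \<epsilon>\<in>{\<epsilon>\<in>E. \<epsilon> \<le> e}. ennreal (2 powr p) * (lp_integral lam p K (u \<circ> H \<epsilon>) + lp_integral lam p K (v \<circ> H \<epsilon>)))"
      using lp_integral_diff[OF _ comp_H_measurable[OF um] comp_H_measurable[OF vm] compact_sets[OF K]] p1
      by (intro SUP_mono) (auto simp: o_def)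
    also have "\<dots> \<le> ennreal (2 powr p) * ((SUP \<epsilon>\<in>{\<epsilon>\<in>E. \<epsilon> \<le> e}. lp_integral lam p K (u \<circ> H \<epsilon>)) +
        (SUP \<epsilon>\<in>{\<epsilon>\<in>E. \<epsilon> \<le> e}. lp_integral lam p K (v \<circ> H \<epsilon>)))"
      by (intro SUP_least mult_left_mono add_mono SUP_upper) auto
    also have "\<dots> < \<infinity>" using u v K unfolding Xi_def by (simp add: ennreal_mult_less_top)
    finally show ?thesis .
  qed
  ultimately show ?thesis unfolding Xi_def Lp_loc_def using um vm by auto
qed

lemma BC_bounded:
  assumes "u \<in> BC" obtains C where "C \<ge> 0" "\<And>x. cmod (u x) \<le> C"
proof -
  obtain a where "\<forall>y\<in>range u. norm y \<le> a" using assms unfolding BC_def bounded_iff by blast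
  then have "\<And>x. cmod (u x) \<le> max a 0" by (simp add: le_max_iff_disj)
  then show ?thesis using that[of "max a 0"] by simp
qed

lemma BC_measurable: "u \<in> BC \<Longrightarrow> u \<in> borel_measurable lam"
  unfolding BC_def using borel_measurable_continuous_onI measurable_lam_iff by blast

text \<open>Bounded functions have uniformly bounded local \<open>L\<^sup>p\<close> integrals, so \<open>\<Pi>\<^sup>\<infinity> \<subseteq> \<Xi>\<^sup>p\<close>.\<close>

lemma Pi_subset_Xi: assumes "u \<in> Pi_sp" shows "u \<in> Xi_sp"
proof -
  have uBC: "u \<in> BC" using assms by (simp add: Pi_inf_def)
  obtain C where C: "C \<ge> 0" "\<And>x. cmod (u x) \<le> C" using BC_bounded[OF uBC] by blast
  have fin: "ennreal (C powr p) * emeasure lam K < \<infinity>" if "compact K" for K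
    using radon_measure_compact_finite[OF lam_radon that] by (simp add: ennreal_mult_less_top)
  have bnd: "lp_integral lam p K w \<le> ennreal (C powr p) * emeasure lam K"
    if "compact K" "\<And>x. cmod (w x) \<le> C" for K w
    using lp_integral_bounded[of p w C] p1 that compact_sets by auto
  have "lp_integral lam p K u < \<infinity>" if K: "compact K" for K
    using bnd[of K u, OF K C(2)] fin[OF K] by (simp add: order.strict_trans1)
  moreover have "(SUP \<epsilon>\<in>{\<epsilon>\<in>E. \<epsilon> \<le> e}. lp_integral lam p K (u \<circ> H \<epsilon>)) < \<infinity>" if K: "compact K" for K
  proof -
    have "(SUP \<epsilon>\<in>{\<epsilon>\<in>E. \<epsilon> \<le> e}. lp_integral lam p K (u \<circ> H \<epsilon>)) \<le> ennreal (C powr p) * emeasure lam K"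
      by (intro SUP_least bnd[OF K]) (use C(2) in auto)
    then show ?thesis using fin[OF K] by (simp add: order.strict_trans1)
  qed
  ultimately show ?thesis unfolding Xi_def Lp_loc_def using BC_measurable[OF uBC] by blast
qed

definition B_measure :: real where "B_measure = measure lam B"

lemma B_measure_pos: "B_measure > 0"
  using B_positive B_finite unfolding B_measure_def by (simp add: measure_def enn2real_positive_iff)

text \<open>Testing against the indicator of B (whose integral is positive) shows that the weak-*
  limit is unique, so \<open>mean_value\<close> picks it.\<close>

lemma weakstar_mean_unique:
  assumes "weakstar_mean E H lam u c" "weakstar_mean E H lam u d" shows "c = d"
proof -
  define g0 where "g0 x = complex_of_real (indicator B x)" for x
  have gi: "integrable lam g0" unfolding g0_def using B_sets B_finite by simp
  have ig: "integral\<^sup>L lam g0 = complex_of_real B_measure"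
    unfolding g0_def B_measure_def using sets_eq_imp_space_eq[OF lam_sets] by simp
  have "((\<lambda>\<epsilon>. \<integral>x. u (H \<epsilon> x) * g0 x \<partial>lam) \<longlongrightarrow> c * integral\<^sup>L lam g0) theta"
       "((\<lambda>\<epsilon>. \<integral>x. u (H \<epsilon> x) * g0 x \<partial>lam) \<longlongrightarrow> d * integral\<^sup>L lam g0) theta"
    using assms gi unfolding weakstar_mean_def by blast+
  then have "c * integral\<^sup>L lam g0 = d * integral\<^sup>L lam g0"
    using tendsto_unique theta_nontrivial by blast
  then show ?thesis using ig B_measure_pos by simp
qed

lemma mean_eq: "weakstar_mean E H lam u c \<Longrightarrow> mean u = c"
  unfolding mean_value_def using weakstar_mean_unique by blast

lemma BC_pairing_integrable:
  assumes u: "u \<in> BC" and g: "integrable lam g" and eE: "\<epsilon> \<in> E"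
  shows "integrable lam (\<lambda>x. u (H \<epsilon> x) * g x)"
proof -
  obtain C where C: "C \<ge> 0" "\<And>x. cmod (u x) \<le> C" using BC_bounded[OF u] by blast
  show ?thesis
  proof (rule Bochner_Integration.integrable_bound[of _ "\<lambda>x. complex_of_real C * g x"])
    show "integrable lam (\<lambda>x. complex_of_real C * g x)" using g by simp
    show "(\<lambda>x. u (H \<epsilon> x) * g x) \<in> borel_measurable lam"
      using comp_H_measurable[OF BC_measurable[OF u] eE] g by measurable
    show "AE x in lam. cmod (u (H \<epsilon> x) * g x) \<le> cmod (complex_of_real C * g x)"
      using C by (auto simp: norm_mult intro!: mult_right_mono)
  qed
qed

lemma BC_diff:
  assumes uB: "u \<in> BC" and vB: "v \<in> BC"
  shows "(\<lambda>x. u x - v x) \<in> BC"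
proof -
  obtain Cu where "Cu \<ge> 0" and Cu: "\<And>x. cmod (u x) \<le> Cu" using BC_bounded[OF uB] by blast
  obtain Cv where "Cv \<ge> 0" and Cv: "\<And>x. cmod (v x) \<le> Cv" using BC_bounded[OF vB] by blast
  have "norm (u x - v x) \<le> Cu + Cv" for x
    using norm_triangle_ineq4[of "u x" "v x"] Cu[of x] Cv[of x] by simp
  then have "bounded (range (\<lambda>x. u x - v x))" unfolding bounded_iff by blast
  moreover have "continuous_on UNIV (\<lambda>x. u x - v x)"
    using uB vB unfolding BC_def by (auto intro: continuous_on_diff)
  ultimately show ?thesis unfolding BC_def by simp
qed

lemma weakstar_mean_diff:
  assumes uB: "u \<in> BC" and vB: "v \<in> BC"
    and c: "weakstar_mean E H lam u c" and d: "weakstar_mean E H lam v d"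
  shows "weakstar_mean E H lam (\<lambda>x. u x - v x) (c - d)"
  unfolding weakstar_mean_def
proof (intro allI impI)
  fix g :: "'a \<Rightarrow> complex" assume g: "integrable lam g"
  have l1: "((\<lambda>\<epsilon>. \<integral>x. u (H \<epsilon> x) * g x \<partial>lam) \<longlongrightarrow> c * integral\<^sup>L lam g) theta"
    and l2: "((\<lambda>\<epsilon>. \<integral>x. v (H \<epsilon> x) * g x \<partial>lam) \<longlongrightarrow> d * integral\<^sup>L lam g) theta"
    using c d g unfolding weakstar_mean_def by blast+
  have ev: "eventually (\<lambda>\<epsilon>. (\<integral>x. u (H \<epsilon> x) * g x \<partial>lam) - (\<integral>x. v (H \<epsilon> x) * g x \<partial>lam) =
      (\<integral>x. (u (H \<epsilon> x) - v (H \<epsilon> x)) * g x \<partial>lam)) theta"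
    using eventually_theta_below[OF e_in_E]
  proof eventually_elim
    case (elim \<epsilon>)
    then have "\<epsilon> \<in> E" by simp
    then show ?case
      using Bochner_Integration.integral_diff[OF BC_pairing_integrable[OF uB g] BC_pairing_integrable[OF vB g]]
      by (simp add: left_diff_distrib)
  qed
  have "((\<lambda>\<epsilon>. (\<integral>x. u (H \<epsilon> x) * g x \<partial>lam) - (\<integral>x. v (H \<epsilon> x) * g x \<partial>lam)) \<longlongrightarrow> (c - d) * integral\<^sup>L lam g) theta"
    using tendsto_diff[OF l1 l2] by (simp add: left_diff_distrib)
  then show "((\<lambda>\<epsilon>. \<integral>x. (u (H \<epsilon> x) - v (H \<epsilon> x)) * g x \<partial>lam) \<longlongrightarrow> (c - d) * integral\<^sup>L lam g) theta"
    using tendsto_cong[OF ev] by simp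
qed

lemma Pi_diff:
  assumes u: "u \<in> Pi_sp" and v: "v \<in> Pi_sp"
  shows "(\<lambda>x. u x - v x) \<in> Pi_sp" "mean (\<lambda>x. u x - v x) = mean u - mean v"
proof -
  have uB: "u \<in> BC" and vB: "v \<in> BC" using u v by (auto simp: Pi_inf_def)
  obtain c d where c: "weakstar_mean E H lam u c" and d: "weakstar_mean E H lam v d"
    using u v by (auto simp: Pi_inf_def)
  have ws: "weakstar_mean E H lam (\<lambda>x. u x - v x) (c - d)" using weakstar_mean_diff[OF uB vB c d] .
  show "(\<lambda>x. u x - v x) \<in> Pi_sp" using BC_diff[OF uB vB] ws unfolding Pi_inf_def by blast
  show "mean (\<lambda>x. u x - v x) = mean u - mean v"
    using mean_eq[OF ws] mean_eq[OF c] mean_eq[OF d] by simp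
qed

subsection \<open>Step (2): uniform bounds for the pairings\<close>

lemma eventual_Lp_bound:
  assumes \<Omega>: "compact (closure \<Omega>)"
  obtains \<alpha> C where "\<alpha> \<in> E" "C \<ge> 0" "\<And>w \<epsilon>. w \<in> Xi_sp \<Longrightarrow> \<epsilon> \<in> E \<Longrightarrow> \<epsilon> \<le> \<alpha> \<Longrightarrow>
      lp_integral lam p \<Omega> (\<lambda>x. w (H \<epsilon> x)) \<le> ennreal (C * Xnorm w powr p)"
proof -
  obtain \<alpha> C where \<alpha>: "\<alpha> \<in> E" and C: "C \<ge> 0" and bound: "\<And>(w :: 'a \<Rightarrow> complex) \<epsilon>.
      w \<in> borel_measurable lam \<Longrightarrow> \<epsilon> \<in> E \<Longrightarrow> \<epsilon> \<le> \<alpha> \<Longrightarrow>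
      lp_integral lam p (closure \<Omega>) (w \<circ> H \<epsilon>) \<le> ennreal C * sup_B w"
    using local_Lp_bound[OF \<Omega>] by blast
  show ?thesis
  proof (rule that[OF \<alpha> C])
    fix w \<epsilon> assume w: "w \<in> Xi_sp" and eps: "\<epsilon> \<in> E" "\<epsilon> \<le> \<alpha>"
    have "lp_integral lam p \<Omega> (\<lambda>x. w (H \<epsilon> x)) \<le> lp_integral lam p (closure \<Omega>) (w \<circ> H \<epsilon>)"
      unfolding o_def by (rule lp_integral_mono_set[OF closure_subset])
    also have "\<dots> \<le> ennreal C * sup_B w" using bound[OF Xi_measurable[OF w] eps] .
    also have "\<dots> = ennreal (C * Xnorm w powr p)" using Xnorm_pow[OF w] C by (simp add: ennreal_mult)
    finally show "lp_integral lam p \<Omega> (\<lambda>x. w (H \<epsilon> x)) \<le> ennreal (C * Xnorm w powr p)" .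
  qed
qed

lemma eventual_pairing_bound:
  assumes \<Omega>: "open \<Omega>" "compact (closure \<Omega>)" and dt: "dual_test lam p \<Omega> g"
  obtains \<alpha> D where "\<alpha> \<in> E" "D \<ge> 0" "\<And>w \<epsilon>. w \<in> Xi_sp \<Longrightarrow> \<epsilon> \<in> E \<Longrightarrow> \<epsilon> \<le> \<alpha> \<Longrightarrow>
      set_integrable lam \<Omega> (\<lambda>x. w (H \<epsilon> x) * g x) \<and>
      cmod (set_lebesgue_integral lam \<Omega> (\<lambda>x. w (H \<epsilon> x) * g x)) \<le> D * Xnorm w"
proof -
  have \<Omega>s: "\<Omega> \<in> sets lam" using \<Omega>(1) lam_sets by simp
  obtain C where C: "C \<ge> 0" and pair: "\<And>f. f \<in> borel_measurable lam \<Longrightarrow> lp_integral lam p \<Omega> f < \<infinity> \<Longrightarrow>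
     set_integrable lam \<Omega> (\<lambda>x. f x * g x) \<and>
     cmod (set_lebesgue_integral lam \<Omega> (\<lambda>x. f x * g x)) \<le> C * enn2real (lp_integral lam p \<Omega> f) powr (1/p)"
    using dual_test_pairing_bound[OF p1 \<Omega>s dt] by blast
  obtain \<alpha> C2 where \<alpha>: "\<alpha> \<in> E" and C2: "C2 \<ge> 0" and bound: "\<And>w \<epsilon>. w \<in> Xi_sp \<Longrightarrow> \<epsilon> \<in> E \<Longrightarrow> \<epsilon> \<le> \<alpha> \<Longrightarrow>
      lp_integral lam p \<Omega> (\<lambda>x. w (H \<epsilon> x)) \<le> ennreal (C2 * Xnorm w powr p)"
    using eventual_Lp_bound[OF \<Omega>(2)] by blast
  show ?thesis
  proof (rule that[OF \<alpha>, of "C * C2 powr (1/p)"])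
    fix w \<epsilon> assume w: "w \<in> Xi_sp" and eps: "\<epsilon> \<in> E" "\<epsilon> \<le> \<alpha>"
    have lpb: "lp_integral lam p \<Omega> (\<lambda>x. w (H \<epsilon> x)) \<le> ennreal (C2 * Xnorm w powr p)"
      using bound[OF w eps] .
    then have "enn2real (lp_integral lam p \<Omega> (\<lambda>x. w (H \<epsilon> x))) powr (1/p) \<le> (C2 * Xnorm w powr p) powr (1/p)"
      using p1 C2 by (intro powr_mono2 enn2real_leI) auto
    also have "\<dots> = C2 powr (1/p) * Xnorm w"
      using p1 C2 Xnorm_nonneg[of w] by (simp add: powr_mult powr_powr)
    finally have "C * enn2real (lp_integral lam p \<Omega> (\<lambda>x. w (H \<epsilon> x))) powr (1/p) \<le> C * C2 powr (1/p) * Xnorm w"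
      using C by (simp add: mult_left_mono mult.assoc)
    moreover have "lp_integral lam p \<Omega> (\<lambda>x. w (H \<epsilon> x)) < \<infinity>"
      using lpb by (simp add: order.strict_trans1)
    ultimately show "set_integrable lam \<Omega> (\<lambda>x. w (H \<epsilon> x) * g x) \<and>
        cmod (set_lebesgue_integral lam \<Omega> (\<lambda>x. w (H \<epsilon> x) * g x)) \<le> C * C2 powr (1/p) * Xnorm w"
      using pair[OF comp_H_measurable[OF Xi_measurable[OF w] eps(1)]] by fastforce
  qed (use C C2 in simp)
qed

subsection \<open>Steps (3) and (4): convergence of the pairings\<close>

text \<open>For \<open>v \<in> \<Pi>\<^sup>\<infinity>\<close> the pairings converge by definition of the mean value, because
  \<open>1\<^sub>\<Omega> g\<close> is integrable.\<close>

lemma pairing_tendsto_Pi: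
  assumes v: "v \<in> Pi_sp" and \<Omega>: "open \<Omega>" "compact (closure \<Omega>)" and dt: "dual_test lam p \<Omega> g"
  shows "((\<lambda>\<epsilon>. set_lebesgue_integral lam \<Omega> (\<lambda>x. v (H \<epsilon> x) * g x)) \<longlongrightarrow>
           mean v * set_lebesgue_integral lam \<Omega> g) theta"
proof -
  have \<Omega>s: "\<Omega> \<in> sets lam" using \<Omega>(1) lam_sets by simp
  obtain c where c: "weakstar_mean E H lam v c" using v by (auto simp: Pi_inf_def)
  obtain C where pair: "\<And>f. f \<in> borel_measurable lam \<Longrightarrow> lp_integral lam p \<Omega> f < \<infinity> \<Longrightarrow>
     set_integrable lam \<Omega> (\<lambda>x. f x * g x)"
    using dual_test_pairing_bound[OF p1 \<Omega>s dt] by blast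
  have "lp_integral lam p \<Omega> (\<lambda>x. 1) \<le> emeasure lam (closure \<Omega>)"
    unfolding lp_integral_def using \<Omega>s compact_sets[OF \<Omega>(2)]
    by (simp add: emeasure_mono[OF closure_subset])
  also have "\<dots> < \<infinity>" using radon_measure_compact_finite[OF lam_radon \<Omega>(2)] .
  finally have "set_integrable lam \<Omega> (\<lambda>x. 1 * g x)" by (intro pair) simp_all
  then have "integrable lam (\<lambda>x. indicator \<Omega> x *\<^sub>R g x)" unfolding set_integrable_def by simp
  then have "((\<lambda>\<epsilon>. \<integral>x. v (H \<epsilon> x) * (indicator \<Omega> x *\<^sub>R g x) \<partial>lam) \<longlongrightarrow>
      c * integral\<^sup>L lam (\<lambda>x. indicator \<Omega> x *\<^sub>R g x)) theta"
    using c unfolding weakstar_mean_def by blast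
  moreover have "(\<integral>x. v (H \<epsilon> x) * (indicator \<Omega> x *\<^sub>R g x) \<partial>lam) =
      set_lebesgue_integral lam \<Omega> (\<lambda>x. v (H \<epsilon> x) * g x)" for \<epsilon>
    unfolding set_lebesgue_integral_def by (intro Bochner_Integration.integral_cong) (auto simp: indicator_def)
  ultimately show ?thesis unfolding mean_eq[OF c] set_lebesgue_integral_def[symmetric] by simp
qed

lemma frakX_Xi: "u \<in> frakX_sp \<Longrightarrow> u \<in> Xi_sp"
  unfolding frakX_def by simp

lemma frakX_dense: "u \<in> frakX_sp \<Longrightarrow> \<delta> > 0 \<Longrightarrow> \<exists>v\<in>Pi_sp. Xnorm (\<lambda>x. u x - v x) < \<delta>"
  unfolding frakX_def by blast

lemma frakX_dense_scaled:
  assumes u: "u \<in> frakX_sp" and D: "D \<ge> 0" and \<delta>: "\<delta> > 0"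
  shows "\<exists>v\<in>Pi_sp. D * Xnorm (\<lambda>x. u x - v x) < \<delta>"
proof -
  have "\<delta> / (D + 1) > 0" using \<delta> D by simp
  then obtain v where v: "v \<in> Pi_sp" "Xnorm (\<lambda>x. u x - v x) < \<delta> / (D + 1)"
    using frakX_dense[OF u] by blast
  then have "(D + 1) * Xnorm (\<lambda>x. u x - v x) < \<delta>" using D by (simp add: field_simps)
  moreover have "D * Xnorm (\<lambda>x. u x - v x) \<le> (D + 1) * Xnorm (\<lambda>x. u x - v x)"
    using Xnorm_nonneg by (simp add: distrib_right)
  ultimately show ?thesis using v(1) by (meson le_less_trans)
qed

lemma pairing_eventually_close:
  assumes \<Omega>: "open \<Omega>" "compact (closure \<Omega>)" and dt: "dual_test lam p \<Omega> g"
  obtains D where "D \<ge> 0" "\<And>u v \<eta>. u \<in> frakX_sp \<Longrightarrow> v \<in> Pi_sp \<Longrightarrow> \<eta> > 0 \<Longrightarrow>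
      eventually (\<lambda>\<epsilon>. cmod (set_lebesgue_integral lam \<Omega> (\<lambda>x. u (H \<epsilon> x) * g x) -
        mean v * set_lebesgue_integral lam \<Omega> g) \<le> D * Xnorm (\<lambda>x. u x - v x) + \<eta>) theta"
proof -
  obtain \<alpha> D where \<alpha>: "\<alpha> \<in> E" and D: "D \<ge> 0" and pb: "\<And>w \<epsilon>. w \<in> Xi_sp \<Longrightarrow> \<epsilon> \<in> E \<Longrightarrow> \<epsilon> \<le> \<alpha> \<Longrightarrow>
      set_integrable lam \<Omega> (\<lambda>x. w (H \<epsilon> x) * g x) \<and>
      cmod (set_lebesgue_integral lam \<Omega> (\<lambda>x. w (H \<epsilon> x) * g x)) \<le> D * Xnorm w"
    using eventual_pairing_bound[OF \<Omega> dt] by blast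
  define IG where "IG = set_lebesgue_integral lam \<Omega> g"
  define S where "S w \<epsilon> = set_lebesgue_integral lam \<Omega> (\<lambda>x. w (H \<epsilon> x) * g x)" for w \<epsilon>
  have "eventually (\<lambda>\<epsilon>. cmod (S u \<epsilon> - mean v * IG) \<le> D * Xnorm (\<lambda>x. u x - v x) + \<eta>) theta"
    if u: "u \<in> frakX_sp" and v: "v \<in> Pi_sp" and \<eta>: "\<eta> > 0" for u v \<eta>
  proof -
    have uX: "u \<in> Xi_sp" and vX: "v \<in> Xi_sp" using frakX_Xi[OF u] Pi_subset_Xi[OF v] .
    have "eventually (\<lambda>\<epsilon>. dist (S v \<epsilon>) (mean v * IG) < \<eta>) theta"
      using pairing_tendsto_Pi[OF v \<Omega> dt] \<eta> unfolding S_def IG_def tendsto_iff by blast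
    then show ?thesis using eventually_theta_below[OF \<alpha>]
    proof eventually_elim
      case (elim \<epsilon>)
      then have eps: "\<epsilon> \<in> E" "\<epsilon> \<le> \<alpha>" by simp_all
      have "S (\<lambda>x. u x - v x) \<epsilon> = S u \<epsilon> - S v \<epsilon>"
        unfolding S_def using set_integral_diff(2)[OF pb[OF uX eps, THEN conjunct1] pb[OF vX eps, THEN conjunct1]]
        by (simp add: left_diff_distrib)
      moreover have "cmod (S (\<lambda>x. u x - v x) \<epsilon>) \<le> D * Xnorm (\<lambda>x. u x - v x)"
        using pb[OF Xi_diff[OF uX vX] eps] unfolding S_def by blast
      moreover have "cmod (S u \<epsilon> - mean v * IG) \<le> cmod (S u \<epsilon> - S v \<epsilon>) + cmod (S v \<epsilon> - mean v * IG)"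
        using norm_triangle_ineq[of "S u \<epsilon> - S v \<epsilon>" "S v \<epsilon> - mean v * IG"] by simp
      ultimately show ?case using elim(1) by (simp add: dist_norm)
    qed
  qed
  then show ?thesis using that[OF D] unfolding S_def IG_def by blast
qed

text \<open>Density of \<open>\<Pi>\<^sup>\<infinity>\<close> in \<open>\<frak>X\<^sup>p\<close> and completeness: for \<open>u \<in> \<frak>X\<^sup>p\<close> the pairings converge,
  and the limit is within \<open>D \<parallel>u - v\<parallel>\<^sub>\<Xi>\<close> of \<open>M(v) \<integral>\<^sub>\<Omega> g\<close> for every \<open>v \<in> \<Pi>\<^sup>\<infinity>\<close>.\<close>

lemma pairing_limit:
  assumes \<Omega>: "open \<Omega>" "compact (closure \<Omega>)" and dt: "dual_test lam p \<Omega> g"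
  obtains D where "D \<ge> 0" "\<And>u. u \<in> frakX_sp \<Longrightarrow> \<exists>l.
      ((\<lambda>\<epsilon>. set_lebesgue_integral lam \<Omega> (\<lambda>x. u (H \<epsilon> x) * g x)) \<longlongrightarrow> l) theta \<and>
      (\<forall>v\<in>Pi_sp. cmod (l - mean v * set_lebesgue_integral lam \<Omega> g) \<le> D * Xnorm (\<lambda>x. u x - v x))"
proof -
  obtain D where D: "D \<ge> 0" and close: "\<And>u v \<eta>. u \<in> frakX_sp \<Longrightarrow> v \<in> Pi_sp \<Longrightarrow> \<eta> > 0 \<Longrightarrow>
      eventually (\<lambda>\<epsilon>. cmod (set_lebesgue_integral lam \<Omega> (\<lambda>x. u (H \<epsilon> x) * g x) -
        mean v * set_lebesgue_integral lam \<Omega> g) \<le> D * Xnorm (\<lambda>x. u x - v x) + \<eta>) theta"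
    using pairing_eventually_close[OF \<Omega> dt] by blast
  show ?thesis
  proof (rule that[OF D])
    fix u assume u: "u \<in> frakX_sp"
    obtain l where "((\<lambda>\<epsilon>. set_lebesgue_integral lam \<Omega> (\<lambda>x. u (H \<epsilon> x) * g x)) \<longlongrightarrow> l) theta"
        "\<And>v. v \<in> Pi_sp \<Longrightarrow> cmod (l - mean v * set_lebesgue_integral lam \<Omega> g) \<le> D * Xnorm (\<lambda>x. u x - v x)"
      using limit_by_approximation[OF theta_nontrivial frakX_dense_scaled[OF u D] close[OF u]] by blast
    then show "\<exists>l. ((\<lambda>\<epsilon>. set_lebesgue_integral lam \<Omega> (\<lambda>x. u (H \<epsilon> x) * g x)) \<longlongrightarrow> l) theta \<and>
        (\<forall>v\<in>Pi_sp. cmod (l - mean v * set_lebesgue_integral lam \<Omega> g) \<le> D * Xnorm (\<lambda>x. u x - v x))"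
      by blast
  qed
qed

lemma Pi_subset_frakX: assumes v: "v \<in> Pi_sp" shows "v \<in> frakX_sp"
proof -
  have "Xnorm (\<lambda>x. v x - v x) = 0" using Xnorm_zero by simp
  then have "\<forall>\<delta>>0. \<exists>w\<in>Pi_sp. Xnorm (\<lambda>x. v x - w x) < \<delta>"
    using v by (intro allI impI bexI[of _ v]) simp_all
  then show ?thesis unfolding frakX_def using Pi_subset_Xi[OF v] by blast
qed

lemma frakX_diff: assumes u: "u \<in> frakX_sp" and v: "v \<in> Pi_sp" shows "(\<lambda>x. u x - v x) \<in> frakX_sp"
proof -
  have "\<exists>w\<in>Pi_sp. Xnorm (\<lambda>x. (u x - v x) - w x) < \<delta>" if "\<delta> > 0" for \<delta>
  proof -
    obtain w where w: "w \<in> Pi_sp" "Xnorm (\<lambda>x. u x - w x) < \<delta>" using frakX_dense[OF u \<open>\<delta> > 0\<close>] by blast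
    have "(\<lambda>x. (u x - v x) - (w x - v x)) = (\<lambda>x. u x - w x)" by simp
    then show ?thesis using Pi_diff(1)[OF w(1) v] w(2) by (intro bexI[of _ "\<lambda>x. w x - v x"]) simp_all
  qed
  then show ?thesis unfolding frakX_def using Xi_diff[OF frakX_Xi[OF u] Pi_subset_Xi[OF v]] by blast
qed

definition B_average :: "('a \<Rightarrow> complex) \<Rightarrow> real \<Rightarrow> complex" where
  "B_average u \<epsilon> = set_lebesgue_integral lam B (\<lambda>x. u (H \<epsilon> x))"

definition ext_mean :: "('a \<Rightarrow> complex) \<Rightarrow> complex" where
  "ext_mean u = Lim theta (B_average u) / complex_of_real B_measure"

lemma B_dual_test: "dual_test lam p B (\<lambda>x. 1)"
  using B_finite B_sets unfolding dual_test_def lp_integral_def by auto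

lemma B_integral_one: "set_lebesgue_integral lam B (\<lambda>x. 1::complex) = complex_of_real B_measure"
  using set_integral_const[OF B_sets, of "1::complex"] B_finite
  unfolding B_measure_def by (simp add: scaleR_conv_of_real)

text \<open>Eventually in \<open>\<epsilon>\<close> the averages over B are genuine integrals, hence additive in u.\<close>

lemma B_average_integrable:
  obtains \<alpha> where "\<alpha> \<in> E" "\<And>w \<epsilon>. w \<in> Xi_sp \<Longrightarrow> \<epsilon> \<in> E \<Longrightarrow> \<epsilon> \<le> \<alpha> \<Longrightarrow>
    set_integrable lam B (\<lambda>x. w (H \<epsilon> x))"
proof -
  obtain \<alpha> D where \<alpha>: "\<alpha> \<in> E" and "D \<ge> 0" and pb: "\<And>w \<epsilon>. w \<in> Xi_sp \<Longrightarrow> \<epsilon> \<in> E \<Longrightarrow> \<epsilon> \<le> \<alpha> \<Longrightarrow>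
      set_integrable lam B (\<lambda>x. w (H \<epsilon> x) * 1) \<and>
      cmod (set_lebesgue_integral lam B (\<lambda>x. w (H \<epsilon> x) * 1)) \<le> D * Xnorm w"
    using eventual_pairing_bound[OF B_open B_closure_compact B_dual_test] by blast
  show ?thesis by (rule that[OF \<alpha>]) (use pb in simp)
qed

lemma ext_mean_approx:
  "\<exists>C\<ge>0. \<forall>u\<in>frakX_sp. (B_average u \<longlongrightarrow> ext_mean u * B_measure) theta \<and>
      (\<forall>v\<in>Pi_sp. cmod (ext_mean u - mean v) \<le> C * Xnorm (\<lambda>x. u x - v x))"
proof -
  obtain D where D: "D \<ge> 0" and lim: "\<And>u. u \<in> frakX_sp \<Longrightarrow> \<exists>l. (B_average u \<longlongrightarrow> l) theta \<and>
      (\<forall>v\<in>Pi_sp. cmod (l - mean v * B_measure) \<le> D * Xnorm (\<lambda>x. u x - v x))"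
    using pairing_limit[OF B_open B_closure_compact B_dual_test]
    unfolding B_integral_one B_average_def by (auto simp: fun_eq_iff)
  have Bm: "complex_of_real B_measure \<noteq> 0" using B_measure_pos by simp
  have "(B_average u \<longlongrightarrow> ext_mean u * B_measure) theta \<and>
      (\<forall>v\<in>Pi_sp. cmod (ext_mean u - mean v) \<le> D / B_measure * Xnorm (\<lambda>x. u x - v x))"
    if u: "u \<in> frakX_sp" for u
  proof (intro conjI ballI)
    obtain l where l: "(B_average u \<longlongrightarrow> l) theta"
      "\<And>v. v \<in> Pi_sp \<Longrightarrow> cmod (l - mean v * B_measure) \<le> D * Xnorm (\<lambda>x. u x - v x)"
      using lim[OF u] by blast
    have l_eq: "l = ext_mean u * B_measure"
      unfolding ext_mean_def using tendsto_Lim[OF theta_nontrivial l(1)] Bm by simp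
    then show "(B_average u \<longlongrightarrow> ext_mean u * B_measure) theta" using l(1) by simp
    fix v assume v: "v \<in> Pi_sp"
    have "ext_mean u - mean v = (l - mean v * B_measure) / B_measure"
      using l_eq Bm by (simp add: field_simps)
    then have "cmod (ext_mean u - mean v) = cmod (l - mean v * B_measure) / B_measure"
      using B_measure_pos by (simp add: norm_divide)
    also have "\<dots> \<le> D * Xnorm (\<lambda>x. u x - v x) / B_measure"
      using l(2)[OF v] B_measure_pos by (simp add: divide_right_mono)
    finally show "cmod (ext_mean u - mean v) \<le> D / B_measure * Xnorm (\<lambda>x. u x - v x)" by simp
  qed
  moreover have "D / B_measure \<ge> 0" using D B_measure_pos by simp
  ultimately show ?thesis by blast
qed

lemma ext_mean_tendsto: "u \<in> frakX_sp \<Longrightarrow> (B_average u \<longlongrightarrow> ext_mean u * B_measure) theta"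
  using ext_mean_approx by blast

lemma ext_mean_add:
  assumes u: "u \<in> frakX_sp" and v: "v \<in> frakX_sp"
  shows "ext_mean (\<lambda>x. u x + v x) = ext_mean u + ext_mean v"
proof -
  obtain \<alpha> where \<alpha>: "\<alpha> \<in> E" and int: "\<And>w \<epsilon>. w \<in> Xi_sp \<Longrightarrow> \<epsilon> \<in> E \<Longrightarrow> \<epsilon> \<le> \<alpha> \<Longrightarrow>
      set_integrable lam B (\<lambda>x. w (H \<epsilon> x))"
    using B_average_integrable by blast
  have "eventually (\<lambda>\<epsilon>. B_average u \<epsilon> + B_average v \<epsilon> = B_average (\<lambda>x. u x + v x) \<epsilon>) theta"
    using eventually_theta_below[OF \<alpha>]
    by eventually_elim (use int[OF frakX_Xi[OF u]] int[OF frakX_Xi[OF v]] in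
        \<open>simp add: B_average_def set_integral_add(2)\<close>)
  then have "(B_average (\<lambda>x. u x + v x) \<longlongrightarrow> (ext_mean u + ext_mean v) * B_measure) theta"
    using tendsto_add[OF ext_mean_tendsto[OF u] ext_mean_tendsto[OF v]] by (simp add: tendsto_cong distrib_right)
  then have "Lim theta (B_average (\<lambda>x. u x + v x)) = (ext_mean u + ext_mean v) * B_measure"
    by (rule tendsto_Lim[OF theta_nontrivial])
  then show ?thesis unfolding ext_mean_def[of "\<lambda>x. u x + v x"] using B_measure_pos by simp
qed

lemma ext_mean_scale:
  assumes u: "u \<in> frakX_sp"
  shows "ext_mean (\<lambda>x. c * u x) = c * ext_mean u"
proof -
  have "B_average (\<lambda>x. c * u x) = (\<lambda>\<epsilon>. c * B_average u \<epsilon>)"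
    unfolding B_average_def by (simp add: mult.assoc fun_eq_iff)
  then have "Lim theta (B_average (\<lambda>x. c * u x)) = c * (ext_mean u * B_measure)"
    using tendsto_Lim[OF theta_nontrivial tendsto_mult_left[OF ext_mean_tendsto[OF u]]] by simp
  then show ?thesis unfolding ext_mean_def[of "\<lambda>x. c * u x"] using B_measure_pos by simp
qed

lemma ext_mean_cont_lin_extension: "cont_lin_extension E e H lam p B ext_mean"
proof -
  obtain C where C: "C \<ge> 0" and approx: "\<forall>u\<in>frakX_sp. \<forall>v\<in>Pi_sp.
      cmod (ext_mean u - mean v) \<le> C * Xnorm (\<lambda>x. u x - v x)"
    using ext_mean_approx by blast
  have zero: "(\<lambda>x. 0) \<in> Pi_sp" "mean (\<lambda>x. 0) = 0"
  proof -
    have ws: "weakstar_mean E H lam (\<lambda>x. 0) 0" unfolding weakstar_mean_def by simp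
    then show "(\<lambda>x. 0) \<in> Pi_sp" unfolding Pi_inf_def BC_def by auto
    show "mean (\<lambda>x. 0) = 0" using mean_eq[OF ws] .
  qed
  have bounded: "cmod (ext_mean u) \<le> C * Xnorm u" if "u \<in> frakX_sp" for u
  proof -
    have "cmod (ext_mean u - mean (\<lambda>x. 0)) \<le> C * Xnorm (\<lambda>x. u x - 0)"
      using approx that zero(1) by blast
    then show ?thesis using zero(2) by simp
  qed
  have extends: "ext_mean u = mean u" if u: "u \<in> Pi_sp" for u
  proof -
    have "(B_average u \<longlongrightarrow> mean u * B_measure) theta"
      using pairing_tendsto_Pi[OF u B_open B_closure_compact B_dual_test]
      unfolding B_average_def B_integral_one by simp
    then have "Lim theta (B_average u) = mean u * B_measure" by (rule tendsto_Lim[OF theta_nontrivial])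
    then show ?thesis unfolding ext_mean_def using B_measure_pos by simp
  qed
  show ?thesis unfolding cont_lin_extension_def
    using ext_mean_add ext_mean_scale bounded extends by blast
qed

text \<open>Uniqueness: two continuous linear extensions agree on \<open>\<Pi>\<^sup>\<infinity>\<close>, hence everywhere by density.\<close>

lemma ext_mean_unique:
  assumes M: "cont_lin_extension E e H lam p B M'" and u: "u \<in> frakX_sp"
  shows "M' u = ext_mean u"
proof -
  have add: "\<And>a b. a \<in> frakX_sp \<Longrightarrow> b \<in> frakX_sp \<Longrightarrow> M' (\<lambda>x. a x + b x) = M' a + M' b"
    and ext: "\<And>w. w \<in> Pi_sp \<Longrightarrow> M' w = mean w"
    using M unfolding cont_lin_extension_def by blast+
  obtain C where C: "\<forall>w\<in>frakX_sp. cmod (M' w) \<le> C * Xnorm w"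
    using M unfolding cont_lin_extension_def by blast
  obtain D where D: "D \<ge> 0" and approx: "\<forall>v\<in>Pi_sp.
      cmod (ext_mean u - mean v) \<le> D * Xnorm (\<lambda>x. u x - v x)"
    using ext_mean_approx u by blast
  have "cmod (M' u - ext_mean u) \<le> 0"
  proof (rule le_zero_by_density[where K = "\<bar>C\<bar> + D" and T = Pi_sp
        and dist_to = "\<lambda>v. Xnorm (\<lambda>x. u x - v x)"])
    fix v assume v: "v \<in> Pi_sp"
    define a where "a = (\<lambda>x. u x - v x)"
    have aF: "a \<in> frakX_sp" unfolding a_def using frakX_diff[OF u v] .
    have "M' u = M' a + mean v"
      using add[OF aF Pi_subset_frakX[OF v]] ext[OF v] by (simp add: a_def)
    then have "M' u - ext_mean u = M' a - (ext_mean u - mean v)" by simp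
    then have "cmod (M' u - ext_mean u) \<le> cmod (M' a) + cmod (ext_mean u - mean v)"
      using norm_triangle_ineq4 by metis
    also have "\<dots> \<le> \<bar>C\<bar> * Xnorm a + D * Xnorm a"
    proof (rule add_mono)
      show "cmod (M' a) \<le> \<bar>C\<bar> * Xnorm a"
        using C aF Xnorm_nonneg[of a] by (meson abs_ge_self mult_right_mono order_trans)
      show "cmod (ext_mean u - mean v) \<le> D * Xnorm a"
        using approx v unfolding a_def by blast
    qed
    finally show "cmod (M' u - ext_mean u) \<le> (\<bar>C\<bar> + D) * Xnorm (\<lambda>x. u x - v x)"
      unfolding a_def by (simp add: distrib_right)
  next
    show "0 \<le> \<bar>C\<bar> + D" using D by simp
  qed (use frakX_dense[OF u] Xnorm_nonneg in auto)
  then show ?thesis by simp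
qed

lemma eventually_comp_H_Lp:
  assumes u: "u \<in> Xi_sp" and \<Omega>: "compact (closure \<Omega>)"
  shows "eventually (\<lambda>\<epsilon>. (\<lambda>x. u (H \<epsilon> x)) \<in> borel_measurable lam \<and>
      lp_integral lam p \<Omega> (\<lambda>x. u (H \<epsilon> x)) < \<infinity>) theta"
proof -
  obtain \<alpha> C where \<alpha>: "\<alpha> \<in> E" and "C \<ge> 0" and bound: "\<And>w \<epsilon>. w \<in> Xi_sp \<Longrightarrow> \<epsilon> \<in> E \<Longrightarrow> \<epsilon> \<le> \<alpha> \<Longrightarrow>
      lp_integral lam p \<Omega> (\<lambda>x. w (H \<epsilon> x)) \<le> ennreal (C * Xnorm w powr p)"
    using eventual_Lp_bound[OF \<Omega>] by blast
  show ?thesis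
    using eventually_theta_below[OF \<alpha>]
  proof eventually_elim
    case (elim \<epsilon>)
    then have eps: "\<epsilon> \<in> E" "\<epsilon> \<le> \<alpha>" by simp_all
    have "lp_integral lam p \<Omega> (\<lambda>x. u (H \<epsilon> x)) < \<infinity>"
      using bound[OF u eps] by (simp add: order.strict_trans1)
    then show ?case using comp_H_measurable[OF Xi_measurable[OF u] eps(1)] by blast
  qed
qed

text \<open>The pairings of \<open>u \<in> \<frak>X\<^sup>p\<close> converge to \<open>M(u) \<integral>\<^sub>\<Omega> g\<close>: their limit is within a multiple
  of \<open>\<parallel>u - v\<parallel>\<^sub>\<Xi>\<close> of \<open>M(u) \<integral>\<^sub>\<Omega> g\<close> for every \<open>v \<in> \<Pi>\<^sup>\<infinity>\<close>.\<close>

lemma pairing_tendsto_ext_mean: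
  assumes u: "u \<in> frakX_sp" and \<Omega>: "open \<Omega>" "compact (closure \<Omega>)" and dt: "dual_test lam p \<Omega> g"
  shows "((\<lambda>\<epsilon>. set_lebesgue_integral lam \<Omega> (\<lambda>x. u (H \<epsilon> x) * g x)) \<longlongrightarrow>
      set_lebesgue_integral lam \<Omega> (\<lambda>x. ext_mean u * g x)) theta"
proof -
  define IG where "IG = set_lebesgue_integral lam \<Omega> g"
  obtain D where D: "D \<ge> 0" and lim: "\<And>u. u \<in> frakX_sp \<Longrightarrow> \<exists>l.
      ((\<lambda>\<epsilon>. set_lebesgue_integral lam \<Omega> (\<lambda>x. u (H \<epsilon> x) * g x)) \<longlongrightarrow> l) theta \<and>
      (\<forall>v\<in>Pi_sp. cmod (l - mean v * set_lebesgue_integral lam \<Omega> g) \<le> D * Xnorm (\<lambda>x. u x - v x))"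
    using pairing_limit[OF \<Omega> dt] by blast
  from lim[OF u] obtain l where l: "((\<lambda>\<epsilon>. set_lebesgue_integral lam \<Omega> (\<lambda>x. u (H \<epsilon> x) * g x)) \<longlongrightarrow> l) theta"
      "\<And>v. v \<in> Pi_sp \<Longrightarrow> cmod (l - mean v * IG) \<le> D * Xnorm (\<lambda>x. u x - v x)"
    unfolding IG_def by blast
  obtain C where C: "C \<ge> 0" and approx: "\<forall>v\<in>Pi_sp.
      cmod (ext_mean u - mean v) \<le> C * Xnorm (\<lambda>x. u x - v x)"
    using ext_mean_approx u by blast
  have "cmod (l - ext_mean u * IG) \<le> 0"
  proof (rule le_zero_by_density[where K = "D + cmod IG * C" and T = Pi_sp
        and dist_to = "\<lambda>v. Xnorm (\<lambda>x. u x - v x)"])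
    fix v assume v: "v \<in> Pi_sp"
    have "l - ext_mean u * IG = (l - mean v * IG) - IG * (ext_mean u - mean v)"
      by (simp add: algebra_simps)
    then have "cmod (l - ext_mean u * IG) \<le> cmod (l - mean v * IG) + cmod IG * cmod (ext_mean u - mean v)"
      by (metis norm_mult norm_triangle_ineq4)
    also have "\<dots> \<le> D * Xnorm (\<lambda>x. u x - v x) + cmod IG * (C * Xnorm (\<lambda>x. u x - v x))"
      using l(2)[OF v] approx v by (intro add_mono mult_left_mono) auto
    finally show "cmod (l - ext_mean u * IG) \<le> (D + cmod IG * C) * Xnorm (\<lambda>x. u x - v x)"
      by (simp add: algebra_simps)
  next
    show "0 \<le> D + cmod IG * C" using D C by simp
  qed (use frakX_dense[OF u] Xnorm_nonneg in auto)
  then show ?thesis using l(1) unfolding IG_def by simp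
qed

lemma ext_mean_weak_conv:
  assumes u: "u \<in> frakX_sp" and \<Omega>: "open \<Omega>" "compact (closure \<Omega>)"
  shows "weak_Lp_conv lam p \<Omega> (\<lambda>\<epsilon> x. u (H \<epsilon> x)) (\<lambda>x. ext_mean u) theta"
  unfolding weak_Lp_conv_def
  using eventually_comp_H_Lp[OF frakX_Xi[OF u] \<Omega>(2)] pairing_tendsto_ext_mean[OF u \<Omega>] by blast

end

theorem proposition4p1:
  fixes E :: "real set" and gmul :: "real \<Rightarrow> real \<Rightarrow> real" and e :: real
    and iv :: "real \<Rightarrow> real"
    and H :: "real \<Rightarrow> 'a::{t2_space, first_countable_topology} \<Rightarrow> 'a"
    and lam :: "'a measure" and p :: real and B :: "'a set"
  assumes "homogenizer E gmul e iv H lam"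
    and "1 \<le> p"
    and "open B" and "elementary E e iv H B"
  shows "\<exists>M'. cont_lin_extension E e H lam p B M' \<and>
           (\<forall>M''. cont_lin_extension E e H lam p B M'' \<longrightarrow>
              (\<forall>u\<in>frakX E e H lam p B. M'' u = M' u)) \<and>
           (\<forall>u\<in>frakX E e H lam p B. \<forall>\<Omega>. open \<Omega> \<and> compact (closure \<Omega>) \<longrightarrow>
              weak_Lp_conv lam p \<Omega> (\<lambda>\<epsilon> x. u (H \<epsilon> x)) (\<lambda>x. M' u) (theta_filter E))"
proof -
  interpret homogenizer_elementary E gmul e iv H lam p B
    using assms by unfold_locales
  show ?thesis
  proof (intro exI[of _ ext_mean] conjI allI impI ballI)
    show "cont_lin_extension E e H lam p B ext_mean" by (rule ext_mean_cont_lin_extension)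
  next
    fix M'' u assume "cont_lin_extension E e H lam p B M''" "u \<in> frakX E e H lam p B"
    then show "M'' u = ext_mean u" by (rule ext_mean_unique)
  next
    fix u and \<Omega> :: "'a set" assume "u \<in> frakX E e H lam p B" "open \<Omega> \<and> compact (closure \<Omega>)"
    then show "weak_Lp_conv lam p \<Omega> (\<lambda>\<epsilon> x. u (H \<epsilon> x)) (\<lambda>x. ext_mean u) (theta_filter E)"
      using ext_mean_weak_conv by blast
  qed
qed

end
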